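(* Let $T>0$. The map $N$ defined, for $X\in\mathcal{D}([0,T],\mathcal{S}')$, by $N(X)_t=\int_0^t\tau_{t-s}(X_s)'\,ds$, i.e. $\langle N(X)_t,\phi\rangle=-\int_0^t\langle X_s,\tau_{t-s}\phi'\rangle\,ds$ for all $\phi\in\mathcal{S}$ and $t\in[0,T]$, is continuous from $\mathcal{D}([0,T],\mathcal{S}')$ into $\mathcal{C}([0,T],\mathcal{S}')$.
   Context: $\mathcal{S}$ is the Schwartz space on $\mathbb{R}$, $\mathcal{S}'$ the space of tempered distributions with duality $\langle\mu,\phi\rangle$. The distributional derivative $\mu'$ satisfies $\langle\mu',\phi\rangle=-\langle\mu,\phi'\rangle$; $\tau_x\phi(\cdot)=\phi(\cdot-x)$ and $\langle\tau_x\mu,\phi\rangle=\langle\mu,\tau_x\phi\rangle$. A path $X:[0,T]\to\mathcal{S}'$ belongs to $\mathcal{C}([0,T],\mathcal{S}')$ (resp. $\mathcal{D}([0,T],\mathcal{S}')$) iff $t\mapsto\langle X_t,\phi\rangle$ is continuous (resp. right-continuous with left limits) for every $\phi\in\mathcal{S}$; these spaces carry their usual (uniform, resp. Skorokhod) topologies. *)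

theory Defs
  imports "HOL-Analysis.Analysis"
begin

definition smooth_fun :: "(real \<Rightarrow> real) \<Rightarrow> bool" where
  "smooth_fun \<phi> \<longleftrightarrow>
     (\<forall>j x. ((deriv ^^ j) \<phi> has_real_derivative (deriv ^^ Suc j) \<phi> x) (at x))"

definition schwartz :: "(real \<Rightarrow> real) set" where
  "schwartz = {\<phi>. smooth_fun \<phi> \<and>
     (\<forall>j k. \<exists>C. \<forall>x. \<bar>x ^ k * (deriv ^^ j) \<phi> x\<bar> \<le> C)}"

definition schwartz_seminorm :: "nat \<Rightarrow> nat \<Rightarrow> (real \<Rightarrow> real) \<Rightarrow> real" where
  "schwartz_seminorm j k \<phi> = (SUP x. \<bar>x ^ k * (deriv ^^ j) \<phi> x\<bar>)"

definition schwartz_bounded :: "(real \<Rightarrow> real) set \<Rightarrow> bool" where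
  "schwartz_bounded B \<longleftrightarrow> B \<subseteq> schwartz \<and>
     (\<forall>j k. \<exists>C. \<forall>\<phi>\<in>B. \<forall>x. \<bar>x ^ k * (deriv ^^ j) \<phi> x\<bar> \<le> C)"

text \<open>Its values outside the Schwartz space are irrelevant.\<close>
definition tempered :: "((real \<Rightarrow> real) \<Rightarrow> real) \<Rightarrow> bool" where
  "tempered \<mu> \<longleftrightarrow>
     (\<forall>a b \<phi> \<psi>. \<phi> \<in> schwartz \<longrightarrow> \<psi> \<in> schwartz \<longrightarrow>
        \<mu> (\<lambda>x. a * \<phi> x + b * \<psi> x) = a * \<mu> \<phi> + b * \<mu> \<psi>) \<and>
     (\<exists>C n. \<forall>\<phi>\<in>schwartz.
        \<bar>\<mu> \<phi>\<bar> \<le> C * (\<Sum>j\<le>n. \<Sum>k\<le>n. schwartz_seminorm j k \<phi>))"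

definition transl :: "real \<Rightarrow> (real \<Rightarrow> real) \<Rightarrow> (real \<Rightarrow> real)" where
  "transl x \<phi> = (\<lambda>y. \<phi> (y - x))"

text \<open>Paths t in [0,T] to S' are functions real => S'; values outside [0,T] are ignored.\<close>

definition cadlag_on :: "real \<Rightarrow> (real \<Rightarrow> real) \<Rightarrow> bool" where
  "cadlag_on T f \<longleftrightarrow>
     (\<forall>t\<in>{0..<T}. (f \<longlongrightarrow> f t) (at_right t)) \<and>
     (\<forall>t\<in>{0<..T}. \<exists>l. (f \<longlongrightarrow> l) (at_left t))"

definition Dpaths :: "real \<Rightarrow> (real \<Rightarrow> (real \<Rightarrow> real) \<Rightarrow> real) set" where
  "Dpaths T = {X. (\<forall>t\<in>{0..T}. tempered (X t)) \<and>
                  (\<forall>\<phi>\<in>schwartz. cadlag_on T (\<lambda>t. X t \<phi>))}"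

definition Cpaths :: "real \<Rightarrow> (real \<Rightarrow> (real \<Rightarrow> real) \<Rightarrow> real) set" where
  "Cpaths T = {X. (\<forall>t\<in>{0..T}. tempered (X t)) \<and>
                  (\<forall>\<phi>\<in>schwartz. continuous_on {0..T} (\<lambda>t. X t \<phi>))}"

definition time_changes :: "real \<Rightarrow> (real \<Rightarrow> real) set" where
  "time_changes T = {r. strict_mono_on {0..T} r \<and> continuous_on {0..T} r \<and>
                        r ` {0..T} = {0..T}}"

text \<open>Skorokhod (J1) closeness w.r.t. the strong-dual seminorm |.|_B of a bounded
  set B: d_B(X,Y) \<le> delta, with
  d_B(X,Y) = inf over lambda of max(sup_t |lambda t - t|, sup_t sup_(phi in B) |X_t phi - Y_(lambda t) phi|).\<close>
definition skorokhod_close ::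
  "real \<Rightarrow> (real \<Rightarrow> real) set \<Rightarrow> real \<Rightarrow>
   (real \<Rightarrow> (real \<Rightarrow> real) \<Rightarrow> real) \<Rightarrow> (real \<Rightarrow> (real \<Rightarrow> real) \<Rightarrow> real) \<Rightarrow> bool" where
  "skorokhod_close T B \<delta> X Y \<longleftrightarrow>
     (\<exists>r\<in>time_changes T. \<forall>t\<in>{0..T}.
        \<bar>r t - t\<bar> \<le> \<delta> \<and> (\<forall>\<phi>\<in>B. \<bar>X t \<phi> - Y (r t) \<phi>\<bar> \<le> \<delta>))"

definition uniform_close ::
  "real \<Rightarrow> (real \<Rightarrow> real) set \<Rightarrow> real \<Rightarrow>
   (real \<Rightarrow> (real \<Rightarrow> real) \<Rightarrow> real) \<Rightarrow> (real \<Rightarrow> (real \<Rightarrow> real) \<Rightarrow> real) \<Rightarrow> bool" where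
  "uniform_close T B \<epsilon> X Y \<longleftrightarrow> (\<forall>t\<in>{0..T}. \<forall>\<phi>\<in>B. \<bar>X t \<phi> - Y t \<phi>\<bar> \<le> \<epsilon>)"

text \<open>Topological continuity of a map D([0,T],S') \<rightarrow> C([0,T],S'), both topologies being
  generated by the (directed) families of pseudometrics indexed by bounded B.\<close>
definition continuous_D_to_C ::
  "real \<Rightarrow> ((real \<Rightarrow> (real \<Rightarrow> real) \<Rightarrow> real) \<Rightarrow> (real \<Rightarrow> (real \<Rightarrow> real) \<Rightarrow> real)) \<Rightarrow> bool" where
  "continuous_D_to_C T F \<longleftrightarrow>
     (\<forall>X\<in>Dpaths T. F X \<in> Cpaths T) \<and>
     (\<forall>X\<in>Dpaths T. \<forall>B'. schwartz_bounded B' \<longrightarrow> (\<forall>\<epsilon>>0.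
        \<exists>B \<delta>. schwartz_bounded B \<and> \<delta> > 0 \<and>
          (\<forall>Y\<in>Dpaths T. skorokhod_close T B \<delta> X Y \<longrightarrow> uniform_close T B' \<epsilon> (F X) (F Y))))"

definition Nmap :: "(real \<Rightarrow> (real \<Rightarrow> real) \<Rightarrow> real) \<Rightarrow> (real \<Rightarrow> (real \<Rightarrow> real) \<Rightarrow> real)" where
  "Nmap X = (\<lambda>t \<phi>. - integral {0..t} (\<lambda>s. X s (transl (t - s) (deriv \<phi>))))"

end

theory Submission
  imports Defs
begin

(*
  For X in D([0,T],S') every t |-> <X_t, phi> is cadlag, hence bounded on [0,T], so by the
  uniform boundedness principle (proved by a gliding hump) a single Schwartz norm q_n controls
  all X_t at once.  Bounded sets of S are totally bounded for q_n, so X is cadlag uniformly on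
  every bounded set Psi of test functions, and compactness of [0,T] yields finitely many marks
  between which X varies by at most eta, uniformly on Psi.  For Psi = {tau_a phi' | a in [0,T],
  phi in B} this makes s |-> <X_s, tau_(t-s) phi'> a uniform limit of step functions: N(X)_t is
  well defined, tempered, and Lipschitz in t.  If Y is delta-close to X in the Skorokhod sense
  on Psi, then |<X_s - Y_s, tau_(t-s) phi'>| <= eta + delta except for s within delta of a mark,
  a set of measure at most 2 delta times the number of marks; integrating in s bounds
  <N(X)_t - N(Y)_t, phi> uniformly in t and phi in B.
*)

section \<open>Schwartz functions\<close>

abbreviation Dn :: "nat \<Rightarrow> (real \<Rightarrow> real) \<Rightarrow> real \<Rightarrow> real" where
  "Dn j f \<equiv> (deriv ^^ j) f"

definition schwartz_norm :: "nat \<Rightarrow> (real \<Rightarrow> real) \<Rightarrow> real" where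
  "schwartz_norm n \<phi> = (\<Sum>j\<le>n. \<Sum>k\<le>n. schwartz_seminorm j k \<phi>)"

lemma schwartzI:
  assumes "\<And>j x. (Dn j \<phi> has_real_derivative Dn (Suc j) \<phi> x) (at x)"
    and "\<And>j k. \<exists>C. \<forall>x. \<bar>x ^ k * Dn j \<phi> x\<bar> \<le> C"
  shows "\<phi> \<in> schwartz"
  using assms unfolding schwartz_def smooth_fun_def by blast

lemma schwartz_has_deriv:
  "\<phi> \<in> schwartz \<Longrightarrow> (Dn j \<phi> has_real_derivative Dn (Suc j) \<phi> x) (at x)"
  unfolding schwartz_def smooth_fun_def by blast

lemma schwartz_decay: "\<phi> \<in> schwartz \<Longrightarrow> \<exists>C. \<forall>x. \<bar>x ^ k * Dn j \<phi> x\<bar> \<le> C"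
  unfolding schwartz_def by blast

lemma schwartz_seminorm_upper:
  assumes "\<phi> \<in> schwartz"
  shows "\<bar>x ^ k * Dn j \<phi> x\<bar> \<le> schwartz_seminorm j k \<phi>"
proof -
  obtain C where "\<forall>x. \<bar>x ^ k * Dn j \<phi> x\<bar> \<le> C"
    using schwartz_decay[OF assms] by blast
  then have "bdd_above (range (\<lambda>x. \<bar>x ^ k * Dn j \<phi> x\<bar>))"
    by (auto intro: bdd_aboveI2)
  then show ?thesis
    unfolding schwartz_seminorm_def by (rule cSUP_upper[OF UNIV_I])
qed

lemma schwartz_seminorm_nonneg: "\<phi> \<in> schwartz \<Longrightarrow> 0 \<le> schwartz_seminorm j k \<phi>"
  using schwartz_seminorm_upper[of \<phi> 0 k j] by linarith

lemma schwartz_seminorm_least: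
  "(\<And>x. \<bar>x ^ k * Dn j \<phi> x\<bar> \<le> c) \<Longrightarrow> schwartz_seminorm j k \<phi> \<le> c"
  unfolding schwartz_seminorm_def by (rule cSUP_least) auto

lemma abs_le_schwartz_seminorm: "\<phi> \<in> schwartz \<Longrightarrow> \<bar>Dn j \<phi> x\<bar> \<le> schwartz_seminorm j 0 \<phi>"
  using schwartz_seminorm_upper[of \<phi> x 0 j] by simp

lemma schwartz_norm_nonneg: "\<phi> \<in> schwartz \<Longrightarrow> 0 \<le> schwartz_norm n \<phi>"
  unfolding schwartz_norm_def by (intro sum_nonneg schwartz_seminorm_nonneg)

lemma schwartz_seminorm_le_norm:
  assumes "\<phi> \<in> schwartz" "j \<le> n" "k \<le> n"
  shows "schwartz_seminorm j k \<phi> \<le> schwartz_norm n \<phi>"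
proof -
  have "schwartz_seminorm j k \<phi> \<le> (\<Sum>k\<le>n. schwartz_seminorm j k \<phi>)"
    using assms by (intro member_le_sum schwartz_seminorm_nonneg) auto
  also have "\<dots> \<le> schwartz_norm n \<phi>"
    unfolding schwartz_norm_def using assms
    by (intro member_le_sum[where f = "\<lambda>j. \<Sum>k\<le>n. schwartz_seminorm j k \<phi>"]
        sum_nonneg schwartz_seminorm_nonneg) auto
  finally show ?thesis .
qed

lemma schwartz_norm_le:
  assumes "\<And>j k x. j \<le> n \<Longrightarrow> k \<le> n \<Longrightarrow> \<bar>x ^ k * Dn j \<phi> x\<bar> \<le> c"
  shows "schwartz_norm n \<phi> \<le> (real n + 1)\<^sup>2 * c"
proof -
  have "schwartz_norm n \<phi> \<le> (\<Sum>j\<le>n. \<Sum>k\<le>n. c)"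
    unfolding schwartz_norm_def by (intro sum_mono schwartz_seminorm_least assms) auto
  also have "\<dots> = (real n + 1)\<^sup>2 * c"
    by (simp add: power2_eq_square algebra_simps)
  finally show ?thesis .
qed

lemma schwartz_norm_eq_0_imp:
  assumes "\<phi> \<in> schwartz" "schwartz_norm n \<phi> = 0"
  shows "\<phi> = (\<lambda>x. 0)"
proof
  fix x
  have "\<bar>\<phi> x\<bar> \<le> schwartz_seminorm 0 0 \<phi>"
    using abs_le_schwartz_seminorm[OF assms(1), of 0 x] by simp
  also have "\<dots> \<le> 0"
    using schwartz_seminorm_le_norm[OF assms(1), of 0 n 0] assms(2) by simp
  finally show "\<phi> x = 0" by simp
qed

lemma Dn_lincomb:
  assumes "\<phi> \<in> schwartz" "\<psi> \<in> schwartz"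
  shows "Dn j (\<lambda>x. a * \<phi> x + b * \<psi> x) = (\<lambda>x. a * Dn j \<phi> x + b * Dn j \<psi> x)"
proof (induction j)
  case (Suc j)
  have "deriv (\<lambda>x. a * Dn j \<phi> x + b * Dn j \<psi> x) x = a * Dn (Suc j) \<phi> x + b * Dn (Suc j) \<psi> x"
    for x by (intro DERIV_imp_deriv DERIV_add DERIV_cmult schwartz_has_deriv assms)
  moreover have "Dn (Suc j) (\<lambda>x. a * \<phi> x + b * \<psi> x) = deriv (\<lambda>x. a * Dn j \<phi> x + b * Dn j \<psi> x)"
    using Suc.IH by simp
  ultimately show ?case
    by (simp add: fun_eq_iff)
qed simp

lemma schwartz_lincomb:
  assumes "\<phi> \<in> schwartz" "\<psi> \<in> schwartz"
  shows "(\<lambda>x. a * \<phi> x + b * \<psi> x) \<in> schwartz"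
proof (rule schwartzI)
  fix j x
  show "(Dn j (\<lambda>x. a * \<phi> x + b * \<psi> x) has_real_derivative
      Dn (Suc j) (\<lambda>x. a * \<phi> x + b * \<psi> x) x) (at x)"
    unfolding Dn_lincomb[OF assms] by (intro DERIV_add DERIV_cmult schwartz_has_deriv assms)
next
  fix j k
  obtain C1 C2 where C: "\<forall>x. \<bar>x ^ k * Dn j \<phi> x\<bar> \<le> C1" "\<forall>x. \<bar>x ^ k * Dn j \<psi> x\<bar> \<le> C2"
    using schwartz_decay[OF assms(1)] schwartz_decay[OF assms(2)] by metis
  have "\<bar>x ^ k * Dn j (\<lambda>x. a * \<phi> x + b * \<psi> x) x\<bar> \<le> \<bar>a\<bar> * C1 + \<bar>b\<bar> * C2" for x
  proof -
    have "\<bar>x ^ k * Dn j (\<lambda>x. a * \<phi> x + b * \<psi> x) x\<bar>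
        = \<bar>a * (x ^ k * Dn j \<phi> x) + b * (x ^ k * Dn j \<psi> x)\<bar>"
      unfolding Dn_lincomb[OF assms] by (simp add: algebra_simps)
    also have "\<dots> \<le> \<bar>a\<bar> * \<bar>x ^ k * Dn j \<phi> x\<bar> + \<bar>b\<bar> * \<bar>x ^ k * Dn j \<psi> x\<bar>"
      by (metis abs_mult abs_triangle_ineq)
    also have "\<dots> \<le> \<bar>a\<bar> * C1 + \<bar>b\<bar> * C2"
      using C by (intro add_mono mult_left_mono) auto
    finally show ?thesis .
  qed
  then show "\<exists>C. \<forall>x. \<bar>x ^ k * Dn j (\<lambda>x. a * \<phi> x + b * \<psi> x) x\<bar> \<le> C" by blast
qed

lemma schwartz_diff: "\<phi> \<in> schwartz \<Longrightarrow> \<psi> \<in> schwartz \<Longrightarrow> (\<lambda>x. \<phi> x - \<psi> x) \<in> schwartz"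
  using schwartz_lincomb[of \<phi> \<psi> 1 "-1"] by simp

lemma schwartz_add: "\<phi> \<in> schwartz \<Longrightarrow> \<psi> \<in> schwartz \<Longrightarrow> (\<lambda>x. \<phi> x + \<psi> x) \<in> schwartz"
  using schwartz_lincomb[of \<phi> \<psi> 1 1] by simp

lemma schwartz_scale: "\<phi> \<in> schwartz \<Longrightarrow> (\<lambda>x. c * \<phi> x) \<in> schwartz"
  using schwartz_lincomb[of \<phi> \<phi> c 0] by simp

lemma Dn_zero: "Dn j (\<lambda>x. 0) = (\<lambda>x. 0)"
  by (induction j) auto

lemma schwartz_zero: "(\<lambda>x. 0) \<in> schwartz"
  by (rule schwartzI) (auto simp: Dn_zero)

lemma schwartz_sum:
  "(\<And>i. i \<in> I \<Longrightarrow> \<phi> i \<in> schwartz) \<Longrightarrow> (\<lambda>x. \<Sum>i\<in>I. \<phi> i x) \<in> schwartz"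
  by (induction I rule: infinite_finite_induct) (auto intro: schwartz_zero schwartz_add)

lemma Dn_diff:
  "\<phi> \<in> schwartz \<Longrightarrow> \<psi> \<in> schwartz \<Longrightarrow> Dn j (\<lambda>x. \<phi> x - \<psi> x) = (\<lambda>x. Dn j \<phi> x - Dn j \<psi> x)"
  using Dn_lincomb[of \<phi> \<psi> j 1 "-1"] by simp

lemma Dn_scale: "\<phi> \<in> schwartz \<Longrightarrow> Dn j (\<lambda>x. c * \<phi> x) = (\<lambda>x. c * Dn j \<phi> x)"
  using Dn_lincomb[of \<phi> \<phi> j c 0] by simp

lemma schwartz_norm_scale_le:
  assumes "\<phi> \<in> schwartz"
  shows "schwartz_norm n (\<lambda>x. c * \<phi> x) \<le> \<bar>c\<bar> * schwartz_norm n \<phi>"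
proof -
  have "schwartz_seminorm j k (\<lambda>x. c * \<phi> x) \<le> \<bar>c\<bar> * schwartz_seminorm j k \<phi>" for j k
  proof (rule schwartz_seminorm_least)
    fix x
    have "\<bar>x ^ k * Dn j (\<lambda>x. c * \<phi> x) x\<bar> = \<bar>c\<bar> * \<bar>x ^ k * Dn j \<phi> x\<bar>"
      unfolding Dn_scale[OF assms] by (simp add: abs_mult)
    also have "\<dots> \<le> \<bar>c\<bar> * schwartz_seminorm j k \<phi>"
      by (intro mult_left_mono schwartz_seminorm_upper assms) auto
    finally show "\<bar>x ^ k * Dn j (\<lambda>x. c * \<phi> x) x\<bar> \<le> \<bar>c\<bar> * schwartz_seminorm j k \<phi>" .
  qed
  then show ?thesis
    unfolding schwartz_norm_def by (simp add: sum_distrib_left sum_mono)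
qed

lemma Dn_deriv: "Dn j (deriv \<phi>) = Dn (Suc j) \<phi>"
  by (simp add: funpow_Suc_right del: funpow.simps)

lemma schwartz_deriv: "\<phi> \<in> schwartz \<Longrightarrow> deriv \<phi> \<in> schwartz"
  by (rule schwartzI) (simp_all only: Dn_deriv schwartz_has_deriv schwartz_decay)

lemma DERIV_transl:
  "(f has_real_derivative d) (at (x - a)) \<Longrightarrow> (transl a f has_real_derivative d) (at x)"
  using DERIV_shift[of f d x "-a"] by (simp add: transl_def)

lemma Dn_transl:
  assumes "\<phi> \<in> schwartz"
  shows "Dn j (transl a \<phi>) = transl a (Dn j \<phi>)"
proof (induction j)
  case (Suc j)
  have "deriv (transl a (Dn j \<phi>)) x = Dn (Suc j) \<phi> (x - a)" for x
    by (intro DERIV_imp_deriv DERIV_transl schwartz_has_deriv[OF assms])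
  moreover have "Dn (Suc j) (transl a \<phi>) = deriv (transl a (Dn j \<phi>))"
    using Suc.IH by simp
  ultimately show ?case
    by (simp add: fun_eq_iff transl_def)
qed simp

lemma transl_decay:
  fixes f :: "real \<Rightarrow> real"
  assumes "\<And>y. \<bar>y ^ k * f y\<bar> \<le> c1" "\<And>y. \<bar>f y\<bar> \<le> c0" "\<bar>a\<bar> \<le> T"
  shows "\<bar>x ^ k * f (x - a)\<bar> \<le> 2 ^ k * (c1 + T ^ k * c0)"
proof -
  have "\<bar>x\<bar> \<le> \<bar>x - a\<bar> + \<bar>a\<bar>"
    using abs_triangle_ineq[of "x - a" a] by simp
  then have "\<bar>x\<bar> \<le> 2 * max \<bar>x - a\<bar> T"
    using assms(3) by (auto simp: max_def)
  then have "\<bar>x\<bar> ^ k \<le> 2 ^ k * max \<bar>x - a\<bar> T ^ k"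
    by (metis power_mono power_mult_distrib abs_ge_zero)
  also have "\<dots> \<le> 2 ^ k * (\<bar>x - a\<bar> ^ k + T ^ k)"
    using assms(3) by (auto simp: max_def)
  finally have "\<bar>x ^ k * f (x - a)\<bar> \<le> 2 ^ k * (\<bar>x - a\<bar> ^ k + T ^ k) * \<bar>f (x - a)\<bar>"
    by (simp add: abs_mult power_abs mult_right_mono)
  also have "\<dots> = 2 ^ k * (\<bar>(x - a) ^ k * f (x - a)\<bar> + T ^ k * \<bar>f (x - a)\<bar>)"
    by (simp add: abs_mult power_abs algebra_simps)
  also have "\<dots> \<le> 2 ^ k * (c1 + T ^ k * c0)"
    using assms by (intro mult_left_mono add_mono) (auto intro: mult_left_mono)
  finally show ?thesis .
qed

lemma schwartz_transl:
  assumes "\<phi> \<in> schwartz"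
  shows "transl a \<phi> \<in> schwartz"
proof (rule schwartzI)
  fix j x
  show "(Dn j (transl a \<phi>) has_real_derivative Dn (Suc j) (transl a \<phi>) x) (at x)"
    unfolding Dn_transl[OF assms] transl_def[of a "Dn (Suc j) \<phi>"]
    by (intro DERIV_transl schwartz_has_deriv assms)
next
  fix j k
  obtain c1 c0 where "\<forall>x. \<bar>x ^ k * Dn j \<phi> x\<bar> \<le> c1" "\<forall>x. \<bar>x ^ 0 * Dn j \<phi> x\<bar> \<le> c0"
    using schwartz_decay[OF assms] by metis
  then have "\<forall>x. \<bar>x ^ k * Dn j (transl a \<phi>) x\<bar> \<le> 2 ^ k * (c1 + \<bar>a\<bar> ^ k * c0)"
    unfolding Dn_transl[OF assms] unfolding transl_def by (auto intro: transl_decay)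
  then show "\<exists>C. \<forall>x. \<bar>x ^ k * Dn j (transl a \<phi>) x\<bar> \<le> C" ..
qed

lemma transl_diff_decay:
  fixes f f' :: "real \<Rightarrow> real"
  assumes "\<And>y. (f has_real_derivative f' y) (at y)"
    and "\<And>y. \<bar>y ^ k * f' y\<bar> \<le> c1" "\<And>y. \<bar>f' y\<bar> \<le> c0" "\<bar>a\<bar> \<le> T" "\<bar>b\<bar> \<le> T"
  shows "\<bar>x ^ k * (f (x - a) - f (x - b))\<bar> \<le> 2 ^ k * (c1 + T ^ k * c0) * \<bar>a - b\<bar>"
proof -
  have "norm (x ^ k * f (x - a) - x ^ k * f (x - b)) \<le> 2 ^ k * (c1 + T ^ k * c0) * norm (a - b)"
  proof (rule field_differentiable_bound[where S = "cball 0 T"])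
    fix c :: real
    show "((\<lambda>c. x ^ k * f (x - c)) has_field_derivative - (x ^ k * f' (x - c))) (at c within cball 0 T)"
      by (auto intro!: derivative_eq_intros DERIV_chain2[OF assms(1)])
    assume "c \<in> cball 0 T"
    then show "norm (- (x ^ k * f' (x - c))) \<le> 2 ^ k * (c1 + T ^ k * c0)"
      using transl_decay[of k f' c1 c0 c T x] assms(2,3) by simp
  qed (use assms(4,5) in auto)
  then show ?thesis
    by (simp add: right_diff_distrib)
qed

lemma schwartz_suminf:
  assumes "\<And>i. \<phi> i \<in> schwartz" and "\<And>j k. summable (\<lambda>i. schwartz_seminorm j k (\<phi> i))"
  shows "(\<lambda>x. \<Sum>i. \<phi> i x) \<in> schwartz"
    and "\<bar>x ^ k * Dn j (\<lambda>x. \<Sum>i. \<phi> i x) x\<bar> \<le> (\<Sum>i. schwartz_seminorm j k (\<phi> i))"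
proof -
  have summable_Dn: "summable (\<lambda>i. Dn j (\<phi> i) x)" for j x
    by (rule summable_comparison_test'[OF assms(2)[of j 0], of 0])
      (use abs_le_schwartz_seminorm[OF assms(1)] in auto)
  have has_deriv: "((\<lambda>x. \<Sum>i. Dn j (\<phi> i) x) has_real_derivative (\<Sum>i. Dn (Suc j) (\<phi> i) x)) (at x)"
    for j x
  proof -
    have "uniformly_convergent_on UNIV (\<lambda>n x. \<Sum>i<n. Dn (Suc j) (\<phi> i) x)"
      by (rule Weierstrass_m_test'[OF _ assms(2)[of "Suc j" 0]])
        (metis abs_le_schwartz_seminorm assms(1) real_norm_def)
    then show ?thesis
      using has_field_derivative_series'(2)[of UNIV "\<lambda>i. Dn j (\<phi> i)" "\<lambda>i. Dn (Suc j) (\<phi> i)" 0 x]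
        schwartz_has_deriv[OF assms(1)] summable_Dn by auto
  qed
  have Dn_suminf: "Dn j (\<lambda>x. \<Sum>i. \<phi> i x) = (\<lambda>x. \<Sum>i. Dn j (\<phi> i) x)" for j
  proof (induction j)
    case (Suc j)
    have "Dn (Suc j) (\<lambda>x. \<Sum>i. \<phi> i x) = deriv (\<lambda>x. \<Sum>i. Dn j (\<phi> i) x)"
      using Suc.IH by simp
    also have "\<dots> = (\<lambda>x. \<Sum>i. Dn (Suc j) (\<phi> i) x)"
      using has_deriv by (intro ext DERIV_imp_deriv)
    finally show ?case .
  qed simp
  have decay: "\<bar>x ^ k * Dn j (\<lambda>x. \<Sum>i. \<phi> i x) x\<bar> \<le> (\<Sum>i. schwartz_seminorm j k (\<phi> i))"
    for j k x
  proof -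
    have "x ^ k * Dn j (\<lambda>x. \<Sum>i. \<phi> i x) x = (\<Sum>i. x ^ k * Dn j (\<phi> i) x)"
      unfolding Dn_suminf by (rule suminf_mult[symmetric, OF summable_Dn])
    also have "\<bar>\<dots>\<bar> \<le> (\<Sum>i. schwartz_seminorm j k (\<phi> i))"
      using norm_suminf_le[of "\<lambda>i. x ^ k * Dn j (\<phi> i) x" "\<lambda>i. schwartz_seminorm j k (\<phi> i)"]
        schwartz_seminorm_upper[OF assms(1)] assms(2) by auto
    finally show ?thesis .
  qed
  then show "\<bar>x ^ k * Dn j (\<lambda>x. \<Sum>i. \<phi> i x) x\<bar> \<le> (\<Sum>i. schwartz_seminorm j k (\<phi> i))" .
  show "(\<lambda>x. \<Sum>i. \<phi> i x) \<in> schwartz"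
  proof (rule schwartzI)
    show "(Dn j (\<lambda>x. \<Sum>i. \<phi> i x) has_real_derivative Dn (Suc j) (\<lambda>x. \<Sum>i. \<phi> i x) x) (at x)"
      for j x
      unfolding Dn_suminf by (rule has_deriv)
    show "\<exists>C. \<forall>x. \<bar>x ^ k * Dn j (\<lambda>x. \<Sum>i. \<phi> i x) x\<bar> \<le> C" for j k
      using decay by blast
  qed
qed

lemma schwartz_norm_suminf_le:
  assumes "\<And>i. \<phi> i \<in> schwartz" and "\<And>j k. summable (\<lambda>i. schwartz_seminorm j k (\<phi> i))"
    and "summable c" and "\<And>i j k. j \<le> n \<Longrightarrow> k \<le> n \<Longrightarrow> schwartz_seminorm j k (\<phi> i) \<le> c i"
  shows "schwartz_norm n (\<lambda>x. \<Sum>i. \<phi> i x) \<le> (real n + 1)\<^sup>2 * (\<Sum>i. c i)"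
proof (rule schwartz_norm_le)
  fix j k x assume "j \<le> n" "k \<le> n"
  then have "(\<Sum>i. schwartz_seminorm j k (\<phi> i)) \<le> (\<Sum>i. c i)"
    using assms by (intro suminf_le) auto
  then show "\<bar>x ^ k * Dn j (\<lambda>x. \<Sum>i. \<phi> i x) x\<bar> \<le> (\<Sum>i. c i)"
    using schwartz_suminf(2)[OF assms(1,2), of x k j] by linarith
qed

section \<open>Uniform boundedness of tempered distributions\<close>

lemma tempered_lincomb:
  "tempered \<mu> \<Longrightarrow> \<phi> \<in> schwartz \<Longrightarrow> \<psi> \<in> schwartz \<Longrightarrow>
    \<mu> (\<lambda>x. a * \<phi> x + b * \<psi> x) = a * \<mu> \<phi> + b * \<mu> \<psi>"
  unfolding tempered_def by blast

lemma tempered_diff: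
  "tempered \<mu> \<Longrightarrow> \<phi> \<in> schwartz \<Longrightarrow> \<psi> \<in> schwartz \<Longrightarrow> \<mu> (\<lambda>x. \<phi> x - \<psi> x) = \<mu> \<phi> - \<mu> \<psi>"
  using tempered_lincomb[of \<mu> \<phi> \<psi> 1 "-1"] by simp

lemma tempered_add:
  "tempered \<mu> \<Longrightarrow> \<phi> \<in> schwartz \<Longrightarrow> \<psi> \<in> schwartz \<Longrightarrow> \<mu> (\<lambda>x. \<phi> x + \<psi> x) = \<mu> \<phi> + \<mu> \<psi>"
  using tempered_lincomb[of \<mu> \<phi> \<psi> 1 1] by simp

lemma tempered_scale: "tempered \<mu> \<Longrightarrow> \<phi> \<in> schwartz \<Longrightarrow> \<mu> (\<lambda>x. c * \<phi> x) = c * \<mu> \<phi>"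
  using tempered_lincomb[of \<mu> \<phi> \<phi> c 0] by simp

lemma tempered_zero: "tempered \<mu> \<Longrightarrow> \<mu> (\<lambda>x. 0) = 0"
  using tempered_scale[OF _ schwartz_zero, of \<mu> 0] by simp

lemma tempered_bound:
  assumes "tempered \<mu>"
  obtains C n where "C \<ge> 0" "\<And>\<phi>. \<phi> \<in> schwartz \<Longrightarrow> \<bar>\<mu> \<phi>\<bar> \<le> C * schwartz_norm n \<phi>"
proof -
  obtain C n where C: "\<forall>\<phi>\<in>schwartz. \<bar>\<mu> \<phi>\<bar> \<le> C * schwartz_norm n \<phi>"
    using assms unfolding tempered_def schwartz_norm_def by blast
  have "\<bar>\<mu> \<phi>\<bar> \<le> max C 0 * schwartz_norm n \<phi>" if "\<phi> \<in> schwartz" for \<phi>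
    using C that schwartz_norm_nonneg[OF that, of n]
    by (smt (verit) mult_right_mono max.cobounded1)
  then show ?thesis
    using that[of "max C 0" n] by auto
qed

lemma tempered_unbounded_witness:
  assumes temp: "\<And>s. s \<in> J \<Longrightarrow> tempered (F s)"
    and unbounded: "\<not> (\<exists>C. \<forall>s\<in>J. \<forall>\<phi>\<in>schwartz. \<bar>F s \<phi>\<bar> \<le> C * schwartz_norm m \<phi>)"
    and "e > 0"
  shows "\<exists>s\<in>J. \<exists>\<psi>\<in>schwartz. schwartz_norm m \<psi> \<le> e \<and> L \<le> \<bar>F s \<psi>\<bar>"
proof -
  obtain s \<phi> where s: "s \<in> J" "\<phi> \<in> schwartz" "\<bar>F s \<phi>\<bar> > (\<bar>L\<bar> / e) * schwartz_norm m \<phi>"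
    using unbounded by (meson not_le)
  define q where "q = schwartz_norm m \<phi>"
  have "q \<noteq> 0"
  proof
    assume "q = 0"
    then have "F s \<phi> = 0"
      using schwartz_norm_eq_0_imp[OF s(2)] tempered_zero[OF temp[OF s(1)]] by (simp add: q_def)
    with s(3) \<open>q = 0\<close> show False by (simp add: q_def)
  qed
  then have q: "q > 0"
    using schwartz_norm_nonneg[OF s(2)] by (simp add: q_def order_less_le)
  define c where "c = e / q"
  have c: "c > 0"
    using q \<open>e > 0\<close> by (simp add: c_def)
  have "schwartz_norm m (\<lambda>x. c * \<phi> x) \<le> e"
    using schwartz_norm_scale_le[OF s(2), of m c] c q \<open>e > 0\<close> by (simp add: c_def q_def)
  moreover have "L \<le> \<bar>F s (\<lambda>x. c * \<phi> x)\<bar>"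
  proof -
    have "\<bar>L\<bar> = c * ((\<bar>L\<bar> / e) * q)"
      using q \<open>e > 0\<close> by (simp add: c_def)
    also have "\<dots> \<le> c * \<bar>F s \<phi>\<bar>"
      using s(3) c unfolding q_def by (intro mult_left_mono) auto
    also have "\<dots> = \<bar>F s (\<lambda>x. c * \<phi> x)\<bar>"
      using tempered_scale[OF temp[OF s(1)] s(2)] c by (simp add: abs_mult)
    finally show ?thesis by simp
  qed
  ultimately show ?thesis
    using s(1) schwartz_scale[OF s(2)] by blast
qed

(* Each hump phi i is small in every seminorm controlling an earlier functional F (s k), k < i,
   so later humps barely change F (s k), while F (s i) (phi i) dominates all earlier humps. *)
lemma gliding_hump_choice:
  fixes F :: "'s \<Rightarrow> (real \<Rightarrow> real) \<Rightarrow> real" and C :: "'s \<Rightarrow> real" and n :: "'s \<Rightarrow> nat"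
    and M :: "(real \<Rightarrow> real) \<Rightarrow> real"
  assumes C: "\<And>s. s \<in> J \<Longrightarrow> C s \<ge> 0"
    and witness: "\<And>m e L. e > 0 \<Longrightarrow> \<exists>s\<in>J. \<exists>\<psi>\<in>schwartz. schwartz_norm m \<psi> \<le> e \<and> L \<le> \<bar>F s \<psi>\<bar>"
  obtains s \<phi> where "\<And>i. s i \<in> J" "\<And>i. \<phi> i \<in> schwartz"
    and "\<And>i. (1 + (\<Sum>k<i. C (s k))) * (1 + real (\<Sum>k<i. n (s k)))\<^sup>2 *
      schwartz_norm (i + (\<Sum>k<i. n (s k))) (\<phi> i) \<le> (1/2) ^ i"
    and "\<And>i. real i + 2 + M (\<lambda>x. \<Sum>k<i. \<phi> k x) \<le> \<bar>F (s i) (\<phi> i)\<bar>"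
proof -
  define N where "N f i = (\<Sum>k<i. n (fst (f k)))" for f :: "nat \<Rightarrow> 's \<times> (real \<Rightarrow> real)" and i
  define K where "K f i = (1 + (\<Sum>k<i. C (fst (f k)))) * (1 + real (N f i))\<^sup>2"
    for f :: "nat \<Rightarrow> 's \<times> (real \<Rightarrow> real)" and i
  define P where "P f i r \<longleftrightarrow> fst r \<in> J \<and> snd r \<in> schwartz \<and>
      K f i * schwartz_norm (i + N f i) (snd r) \<le> (1/2) ^ i \<and>
      real i + 2 + M (\<lambda>x. \<Sum>k<i. snd (f k) x) \<le> \<bar>F (fst r) (snd r)\<bar>" for f i r
  have "\<exists>f. \<forall>i. P f i (f i)"
  proof (rule dependent_wellorder_choice)
    fix r and f g :: "nat \<Rightarrow> 's \<times> (real \<Rightarrow> real)" and i :: nat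
    assume "\<And>y. y < i \<Longrightarrow> f y = g y"
    then have "N f i = N g i" "K f i = K g i"
      "(\<lambda>x. \<Sum>k<i. snd (f k) x) = (\<lambda>x. \<Sum>k<i. snd (g k) x)"
      unfolding N_def K_def by (auto intro: sum.cong)
    then show "P f i r = P g i r"
      by (simp add: P_def)
  next
    fix i and f :: "nat \<Rightarrow> 's \<times> (real \<Rightarrow> real)"
    assume "\<And>y. y < i \<Longrightarrow> P f y (f y)"
    then have "(\<Sum>k<i. C (fst (f k))) \<ge> 0"
      unfolding P_def by (auto intro!: sum_nonneg C)
    then have "K f i > 0"
      by (simp add: K_def)
    then obtain s \<psi> where "s \<in> J" "\<psi> \<in> schwartz"
      "schwartz_norm (i + N f i) \<psi> \<le> (1/2) ^ i / K f i"
      "real i + 2 + M (\<lambda>x. \<Sum>k<i. snd (f k) x) \<le> \<bar>F s \<psi>\<bar>"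
      using witness[of "(1/2) ^ i / K f i" "i + N f i" "real i + 2 + M (\<lambda>x. \<Sum>k<i. snd (f k) x)"]
      by auto
    with \<open>K f i > 0\<close> show "\<exists>r. P f i r"
      by (intro exI[of _ "(s, \<psi>)"]) (simp add: P_def field_simps)
  qed
  then obtain f where "\<And>i. P f i (f i)"
    by blast
  then show ?thesis
    by (intro that[of "\<lambda>i. fst (f i)" "\<lambda>i. snd (f i)"]) (simp_all add: P_def K_def N_def)
qed

lemma gliding_hump_sequence:
  fixes F :: "'s \<Rightarrow> (real \<Rightarrow> real) \<Rightarrow> real" and C :: "'s \<Rightarrow> real" and n :: "'s \<Rightarrow> nat"
    and M :: "(real \<Rightarrow> real) \<Rightarrow> real"
  assumes C: "\<And>s. s \<in> J \<Longrightarrow> C s \<ge> 0"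
    and witness: "\<And>m e L. e > 0 \<Longrightarrow> \<exists>s\<in>J. \<exists>\<psi>\<in>schwartz. schwartz_norm m \<psi> \<le> e \<and> L \<le> \<bar>F s \<psi>\<bar>"
  obtains s \<phi> where "\<And>i. s i \<in> J" "\<And>i. \<phi> i \<in> schwartz"
    and "\<And>i j k. j \<le> i \<Longrightarrow> k \<le> i \<Longrightarrow> schwartz_seminorm j k (\<phi> i) \<le> (1/2) ^ i"
    and "\<And>i i' j k. i' < i \<Longrightarrow> j \<le> n (s i') \<Longrightarrow> k \<le> n (s i') \<Longrightarrow>
      (1 + C (s i')) * (1 + real (n (s i')))\<^sup>2 * schwartz_seminorm j k (\<phi> i) \<le> (1/2) ^ i"
    and "\<And>i. real i + 2 + M (\<lambda>x. \<Sum>k<i. \<phi> k x) \<le> \<bar>F (s i) (\<phi> i)\<bar>"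
proof -
  obtain s \<phi> where J: "\<And>i. s i \<in> J" and \<phi>: "\<And>i. \<phi> i \<in> schwartz"
    and chosen: "\<And>i. (1 + (\<Sum>k<i. C (s k))) * (1 + real (\<Sum>k<i. n (s k)))\<^sup>2 *
      schwartz_norm (i + (\<Sum>k<i. n (s k))) (\<phi> i) \<le> (1/2) ^ i"
    and hump: "\<And>i. real i + 2 + M (\<lambda>x. \<Sum>k<i. \<phi> k x) \<le> \<bar>F (s i) (\<phi> i)\<bar>"
    using gliding_hump_choice[of J C F n M, OF C witness] by blast
  define N where "N i = (\<Sum>k<i. n (s k))" for i
  define K where "K i = (1 + (\<Sum>k<i. C (s k))) * (1 + real (N i))\<^sup>2" for i
  have sum_C: "(\<Sum>k<i. C (s k)) \<ge> 0" for i
    using J C by (intro sum_nonneg) auto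
  have small: "K i * schwartz_seminorm j k (\<phi> i) \<le> (1/2) ^ i"
    if "j \<le> i + N i" "k \<le> i + N i" for i j k :: nat
  proof -
    have "K i * schwartz_seminorm j k (\<phi> i) \<le> K i * schwartz_norm (i + N i) (\<phi> i)"
      using that sum_C[of i] by (intro mult_left_mono schwartz_seminorm_le_norm \<phi>) (auto simp: K_def)
    also have "\<dots> \<le> (1/2) ^ i"
      using chosen[of i] by (simp add: K_def N_def)
    finally show ?thesis .
  qed
  show ?thesis
  proof (rule that[OF J \<phi> _ _ hump])
    fix i j k :: nat assume "j \<le> i" "k \<le> i"
    have "1 \<le> K i"
      using sum_C[of i] unfolding K_def
      by (metis le_add_same_cancel1 mult_mono' one_le_power of_nat_0_le_iff mult_1_left zero_le_one)
    then have "schwartz_seminorm j k (\<phi> i) \<le> K i * schwartz_seminorm j k (\<phi> i)"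
      using schwartz_seminorm_nonneg[OF \<phi>, of j k i] by (metis mult_le_cancel_right1 not_le)
    also have "\<dots> \<le> (1/2) ^ i"
      using \<open>j \<le> i\<close> \<open>k \<le> i\<close> by (intro small) auto
    finally show "schwartz_seminorm j k (\<phi> i) \<le> (1/2) ^ i" .
  next
    fix i i' j k :: nat assume "i' < i" "j \<le> n (s i')" "k \<le> n (s i')"
    have "n (s i') \<le> N i" "C (s i') \<le> (\<Sum>k<i. C (s k))"
      using \<open>i' < i\<close> J C unfolding N_def by (auto intro!: member_le_sum)
    then have "(1 + C (s i')) * (1 + real (n (s i')))\<^sup>2 \<le> K i"
      unfolding K_def using C[OF J] sum_C[of i] by (intro mult_mono power_mono) auto
    then have "(1 + C (s i')) * (1 + real (n (s i')))\<^sup>2 * schwartz_seminorm j k (\<phi> i)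
        \<le> K i * schwartz_seminorm j k (\<phi> i)"
      using schwartz_seminorm_nonneg[OF \<phi>] by (rule mult_right_mono)
    also have "\<dots> \<le> (1/2) ^ i"
      using \<open>j \<le> n (s i')\<close> \<open>k \<le> n (s i')\<close> \<open>n (s i') \<le> N i\<close> by (intro small) auto
    finally show "(1 + C (s i')) * (1 + real (n (s i')))\<^sup>2 * schwartz_seminorm j k (\<phi> i) \<le> (1/2) ^ i" .
  qed
qed

lemma schwartz_norm_tail_le:
  assumes \<phi>: "\<And>i. \<phi> i \<in> schwartz" and summable: "\<And>j k. summable (\<lambda>i. schwartz_seminorm j k (\<phi> i))"
    and "C \<ge> 0"
    and small: "\<And>i j k. m < i \<Longrightarrow> j \<le> n \<Longrightarrow> k \<le> n \<Longrightarrow>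
      (1 + C) * (1 + real n)\<^sup>2 * schwartz_seminorm j k (\<phi> i) \<le> (1/2) ^ i"
  shows "C * schwartz_norm n (\<lambda>x. \<Sum>i. \<phi> (i + Suc m) x) \<le> 1"
proof -
  define K where "K = (1 + C) * (1 + real n)\<^sup>2"
  have K: "K > 0"
    using \<open>C \<ge> 0\<close> by (simp add: K_def)
  have geometric: "summable (\<lambda>i. (1/2::real) ^ i)"
    by simp
  have "schwartz_norm n (\<lambda>x. \<Sum>i. \<phi> (i + Suc m) x) \<le> (real n + 1)\<^sup>2 * (\<Sum>i. (1/2) ^ Suc i / K)"
  proof (rule schwartz_norm_suminf_le)
    show "summable (\<lambda>i. schwartz_seminorm j k (\<phi> (i + Suc m)))" for j k
      using summable_ignore_initial_segment[OF summable] .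
    show "summable (\<lambda>i. (1/2::real) ^ Suc i / K)"
      using geometric by (simp add: summable_divide)
    fix i j k assume "j \<le> n" "k \<le> n"
    then have "K * schwartz_seminorm j k (\<phi> (i + Suc m)) \<le> (1/2) ^ (i + Suc m)"
      unfolding K_def by (intro small) auto
    also have "\<dots> \<le> (1/2) ^ Suc i"
      by (intro power_decreasing) auto
    finally show "schwartz_seminorm j k (\<phi> (i + Suc m)) \<le> (1/2) ^ Suc i / K"
      using K by (simp add: field_simps)
  qed (use \<phi> in auto)
  also have "(\<Sum>i. (1/2::real) ^ Suc i / K) = (\<Sum>i. (1/2) ^ i) / (2 * K)"
    using suminf_divide[OF geometric, of "2 * K"] by simp
  also have "\<dots> = 1 / K"
    using suminf_geometric[of "1/2::real"] by simp
  finally have "C * schwartz_norm n (\<lambda>x. \<Sum>i. \<phi> (i + Suc m) x) \<le> C * ((real n + 1)\<^sup>2 / K)"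
    using \<open>C \<ge> 0\<close> by (intro mult_left_mono) auto
  also have "\<dots> = C / (1 + C)"
    using \<open>C \<ge> 0\<close> by (simp add: K_def add.commute)
  also have "\<dots> \<le> 1"
    using \<open>C \<ge> 0\<close> by simp
  finally show ?thesis .
qed

lemma gliding_hump_lower_bound:
  fixes G :: "nat \<Rightarrow> (real \<Rightarrow> real) \<Rightarrow> real" and c :: "nat \<Rightarrow> real" and m :: "nat \<Rightarrow> nat"
  assumes temp: "\<And>i. tempered (G i)"
    and c: "\<And>i. c i \<ge> 0" "\<And>i \<psi>. \<psi> \<in> schwartz \<Longrightarrow> \<bar>G i \<psi>\<bar> \<le> c i * schwartz_norm (m i) \<psi>"
    and M: "\<And>i \<psi>. \<psi> \<in> schwartz \<Longrightarrow> \<bar>G i \<psi>\<bar> \<le> M \<psi>"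
    and \<phi>: "\<And>i. \<phi> i \<in> schwartz" and summable: "\<And>j k. summable (\<lambda>i. schwartz_seminorm j k (\<phi> i))"
    and tail_small: "\<And>i i' j k. i' < i \<Longrightarrow> j \<le> m i' \<Longrightarrow> k \<le> m i' \<Longrightarrow>
      (1 + c i') * (1 + real (m i'))\<^sup>2 * schwartz_seminorm j k (\<phi> i) \<le> (1/2) ^ i"
    and hump: "\<And>i. real i + 2 + M (\<lambda>x. \<Sum>k<i. \<phi> k x) \<le> \<bar>G i (\<phi> i)\<bar>"
  shows "real k + 1 \<le> \<bar>G k (\<lambda>x. \<Sum>i. \<phi> i x)\<bar>"
proof -
  define head where "head = (\<lambda>x. \<Sum>i<k. \<phi> i x)"
  define tail where "tail = (\<lambda>x. \<Sum>i. \<phi> (i + Suc k) x)"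
  have head: "head \<in> schwartz"
    unfolding head_def using \<phi> by (rule schwartz_sum)
  have tail: "tail \<in> schwartz"
    unfolding tail_def using \<phi> summable_ignore_initial_segment[OF summable]
    by (rule schwartz_suminf(1))
  have "(\<Sum>i. \<phi> i x) = tail x + (\<Sum>i<Suc k. \<phi> i x)" for x
    unfolding tail_def
    by (rule suminf_split_initial_segment)
      (rule summable_comparison_test'[OF summable[of 0 0], of 0],
       use abs_le_schwartz_seminorm[OF \<phi>, of 0] in auto)
  then have "(\<lambda>x. \<Sum>i. \<phi> i x) = (\<lambda>x. (head x + \<phi> k x) + tail x)"
    by (auto simp: head_def)
  then have "G k (\<lambda>x. \<Sum>i. \<phi> i x) = G k head + G k (\<phi> k) + G k tail"
    using tempered_add[OF temp schwartz_add[OF head \<phi>] tail] tempered_add[OF temp head \<phi>]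
    by simp
  moreover have "\<bar>G k tail\<bar> \<le> 1"
  proof -
    have "\<bar>G k tail\<bar> \<le> c k * schwartz_norm (m k) tail"
      using c(2)[OF tail] .
    also have "\<dots> \<le> 1"
      unfolding tail_def using \<phi> summable c(1) tail_small by (rule schwartz_norm_tail_le)
    finally show ?thesis .
  qed
  moreover have "\<bar>G k head\<bar> \<le> M head"
    using M[OF head] .
  ultimately show ?thesis
    using hump[of k] unfolding head_def by linarith
qed

theorem tempered_uniform_boundedness:
  fixes F :: "'s \<Rightarrow> (real \<Rightarrow> real) \<Rightarrow> real"
  assumes temp: "\<And>s. s \<in> J \<Longrightarrow> tempered (F s)"
    and pointwise: "\<And>\<phi>. \<phi> \<in> schwartz \<Longrightarrow> \<exists>M. \<forall>s\<in>J. \<bar>F s \<phi>\<bar> \<le> M"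
  shows "\<exists>C n. C \<ge> 0 \<and> (\<forall>s\<in>J. \<forall>\<phi>\<in>schwartz. \<bar>F s \<phi>\<bar> \<le> C * schwartz_norm n \<phi>)"
proof (rule ccontr)
  assume unbounded: "\<not> ?thesis"
  have "\<forall>s\<in>J. \<exists>Cn. fst Cn \<ge> 0 \<and> (\<forall>\<phi>\<in>schwartz. \<bar>F s \<phi>\<bar> \<le> fst Cn * schwartz_norm (snd Cn) \<phi>)"
  proof
    fix s assume "s \<in> J"
    then obtain C n where "C \<ge> 0" "\<And>\<phi>. \<phi> \<in> schwartz \<Longrightarrow> \<bar>F s \<phi>\<bar> \<le> C * schwartz_norm n \<phi>"
      using tempered_bound[OF temp] by blast
    then show "\<exists>Cn. fst Cn \<ge> 0 \<and> (\<forall>\<phi>\<in>schwartz. \<bar>F s \<phi>\<bar> \<le> fst Cn * schwartz_norm (snd Cn) \<phi>)"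
      by (intro exI[of _ "(C, n)"]) simp
  qed
  then obtain Cn where Cn: "\<forall>s\<in>J. fst (Cn s) \<ge> 0 \<and>
      (\<forall>\<phi>\<in>schwartz. \<bar>F s \<phi>\<bar> \<le> fst (Cn s) * schwartz_norm (snd (Cn s)) \<phi>)"
    by (rule bchoice[elim_format]) blast
  have "\<forall>\<phi>\<in>schwartz. \<exists>M. \<forall>s\<in>J. \<bar>F s \<phi>\<bar> \<le> M"
    using pointwise by blast
  then obtain M where M: "\<forall>\<phi>\<in>schwartz. \<forall>s\<in>J. \<bar>F s \<phi>\<bar> \<le> M \<phi>"
    by (rule bchoice[elim_format]) blast
  have "\<not> (\<exists>C. \<forall>s\<in>J. \<forall>\<phi>\<in>schwartz. \<bar>F s \<phi>\<bar> \<le> C * schwartz_norm m \<phi>)" for m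
  proof
    assume "\<exists>C. \<forall>s\<in>J. \<forall>\<phi>\<in>schwartz. \<bar>F s \<phi>\<bar> \<le> C * schwartz_norm m \<phi>"
    then obtain C where "\<forall>s\<in>J. \<forall>\<phi>\<in>schwartz. \<bar>F s \<phi>\<bar> \<le> C * schwartz_norm m \<phi>" ..
    then have "\<forall>s\<in>J. \<forall>\<phi>\<in>schwartz. \<bar>F s \<phi>\<bar> \<le> max C 0 * schwartz_norm m \<phi>"
      by (smt (verit) mult_right_mono max.cobounded1 schwartz_norm_nonneg)
    then have "\<exists>C n. C \<ge> 0 \<and> (\<forall>s\<in>J. \<forall>\<phi>\<in>schwartz. \<bar>F s \<phi>\<bar> \<le> C * schwartz_norm n \<phi>)"
      by (intro exI[of _ "max C 0"] exI[of _ m]) simp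
    with unbounded show False ..
  qed
  note witness = tempered_unbounded_witness[OF temp this]
  obtain s \<phi> where s: "\<And>i. s i \<in> J" and \<phi>: "\<And>i. \<phi> i \<in> schwartz"
    and summable_bound: "\<And>i j k. j \<le> i \<Longrightarrow> k \<le> i \<Longrightarrow> schwartz_seminorm j k (\<phi> i) \<le> (1/2) ^ i"
    and tail_small: "\<And>i i' j k. i' < i \<Longrightarrow> j \<le> snd (Cn (s i')) \<Longrightarrow> k \<le> snd (Cn (s i')) \<Longrightarrow>
      (1 + fst (Cn (s i'))) * (1 + real (snd (Cn (s i'))))\<^sup>2 * schwartz_seminorm j k (\<phi> i) \<le> (1/2) ^ i"
    and hump: "\<And>i. real i + 2 + M (\<lambda>x. \<Sum>k<i. \<phi> k x) \<le> \<bar>F (s i) (\<phi> i)\<bar>"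
    using gliding_hump_sequence[where J = J and C = "\<lambda>s. fst (Cn s)" and n = "\<lambda>s. snd (Cn s)"
        and F = F and M = M, OF _ witness] Cn by blast
  have summable: "summable (\<lambda>i. schwartz_seminorm j k (\<phi> i))" for j k
  proof (rule summable_comparison_test'[where N = "max j k"])
    show "summable (\<lambda>i. (1/2::real) ^ i)" by simp
    show "norm (schwartz_seminorm j k (\<phi> i)) \<le> (1/2) ^ i" if "max j k \<le> i" for i
      using summable_bound[of j i k] that schwartz_seminorm_nonneg[OF \<phi>] by simp
  qed
  define \<Phi> where "\<Phi> = (\<lambda>x. \<Sum>i. \<phi> i x)"
  have \<Phi>: "\<Phi> \<in> schwartz"
    unfolding \<Phi>_def using \<phi> summable by (rule schwartz_suminf(1))
  have "real k + 1 \<le> \<bar>F (s k) \<Phi>\<bar>" for k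
    unfolding \<Phi>_def
  proof (rule gliding_hump_lower_bound[where c = "\<lambda>i. fst (Cn (s i))" and m = "\<lambda>i. snd (Cn (s i))"])
    show "tempered (F (s i))" "fst (Cn (s i)) \<ge> 0" for i
      using temp s Cn by blast+
    show "\<bar>F (s i) \<psi>\<bar> \<le> fst (Cn (s i)) * schwartz_norm (snd (Cn (s i))) \<psi>"
      "\<bar>F (s i) \<psi>\<bar> \<le> M \<psi>" if "\<psi> \<in> schwartz" for i \<psi>
      using that s Cn M by blast+
  qed (use \<phi> summable tail_small hump in blast)+
  moreover have "\<bar>F (s (nat \<lceil>M \<Phi>\<rceil>)) \<Phi>\<bar> \<le> M \<Phi>"
    using M \<Phi> s by blast
  ultimately show False
    by (smt (verit) of_nat_ceiling)
qed

section \<open>Regulated functions\<close>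

(* A finite such A for every eta > 0 is what makes a function a uniform limit of step functions;
   cadlag functions have it. *)
definition osc_between_marks_le :: "real \<Rightarrow> real \<Rightarrow> real set \<Rightarrow> real \<Rightarrow> (real \<Rightarrow> real) \<Rightarrow> bool" where
  "osc_between_marks_le a b A \<eta> f \<longleftrightarrow>
     (\<forall>s u. a \<le> s \<longrightarrow> s \<le> u \<longrightarrow> u < b \<longrightarrow> A \<inter> {s<..u} = {} \<longrightarrow> \<bar>f s - f u\<bar> \<le> \<eta>)"

lemma osc_between_marks_leD:
  "osc_between_marks_le a b A \<eta> f \<Longrightarrow> a \<le> s \<Longrightarrow> s \<le> u \<Longrightarrow> u < b \<Longrightarrow> A \<inter> {s<..u} = {} \<Longrightarrow>
    \<bar>f s - f u\<bar> \<le> \<eta>"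
  unfolding osc_between_marks_le_def by blast

lemma osc_between_marks_le_subinterval:
  "osc_between_marks_le a b A \<eta> f \<Longrightarrow> a \<le> a' \<Longrightarrow> b' \<le> b \<Longrightarrow> osc_between_marks_le a' b' A \<eta> f"
  unfolding osc_between_marks_le_def by force

lemma marks_local_radius:
  fixes G :: "real \<Rightarrow> 'i \<Rightarrow> real"
  assumes right: "\<And>s \<epsilon>. s \<in> {a..<b} \<Longrightarrow> \<epsilon> > 0 \<Longrightarrow> \<exists>c>s. \<forall>u\<in>{s..<c}. \<forall>i\<in>I. \<bar>G u i - G s i\<bar> \<le> \<epsilon>"
    and left: "\<And>s \<epsilon>. s \<in> {a<..b} \<Longrightarrow> \<epsilon> > 0 \<Longrightarrow>
      \<exists>c<s. \<forall>u\<in>{c<..<s}. \<forall>w\<in>{c<..<s}. \<forall>i\<in>I. \<bar>G u i - G w i\<bar> \<le> \<epsilon>"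
    and "s \<in> {a..b}" "\<eta> > 0"
  shows "\<exists>r. r > 0 \<and>
    (s < b \<longrightarrow> (\<forall>u\<in>{s..<s + r}. \<forall>i\<in>I. \<bar>G u i - G s i\<bar> \<le> \<eta> / 2)) \<and>
    (a < s \<longrightarrow> (\<forall>u\<in>{s - r<..<s}. \<forall>w\<in>{s - r<..<s}. \<forall>i\<in>I. \<bar>G u i - G w i\<bar> \<le> \<eta>))"
proof -
  obtain r1 where r1: "r1 > 0" "s < b \<Longrightarrow> \<forall>u\<in>{s..<s + r1}. \<forall>i\<in>I. \<bar>G u i - G s i\<bar> \<le> \<eta> / 2"
  proof (cases "s < b")
    case True
    with right[of s "\<eta> / 2"] assms(3,4) obtain c where "c > s"
      "\<forall>u\<in>{s..<c}. \<forall>i\<in>I. \<bar>G u i - G s i\<bar> \<le> \<eta> / 2" by auto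
    then show ?thesis
      using that[of "c - s"] by auto
  qed (use that[of 1] in auto)
  obtain r2 where r2: "r2 > 0"
    "a < s \<Longrightarrow> \<forall>u\<in>{s - r2<..<s}. \<forall>w\<in>{s - r2<..<s}. \<forall>i\<in>I. \<bar>G u i - G w i\<bar> \<le> \<eta>"
  proof (cases "a < s")
    case True
    with left[of s \<eta>] assms(3,4) obtain c where "c < s"
      "\<forall>u\<in>{c<..<s}. \<forall>w\<in>{c<..<s}. \<forall>i\<in>I. \<bar>G u i - G w i\<bar> \<le> \<eta>" by auto
    then show ?thesis
      using that[of "s - c"] by auto
  qed (use that[of 1] in auto)
  show ?thesis
    using r1 r2 by (intro exI[of _ "min r1 r2"]) auto
qed

(* Compactness of [a,b]: each s gets a radius on which G is eta/2-close to G s on the right and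
   eta-Cauchy on the left; centres and right ends of a finite subcover are the marks. *)
lemma finite_marks:
  fixes G :: "real \<Rightarrow> 'i \<Rightarrow> real"
  assumes right: "\<And>s \<epsilon>. s \<in> {a..<b} \<Longrightarrow> \<epsilon> > 0 \<Longrightarrow> \<exists>c>s. \<forall>u\<in>{s..<c}. \<forall>i\<in>I. \<bar>G u i - G s i\<bar> \<le> \<epsilon>"
    and left: "\<And>s \<epsilon>. s \<in> {a<..b} \<Longrightarrow> \<epsilon> > 0 \<Longrightarrow>
      \<exists>c<s. \<forall>u\<in>{c<..<s}. \<forall>w\<in>{c<..<s}. \<forall>i\<in>I. \<bar>G u i - G w i\<bar> \<le> \<epsilon>"
    and "\<eta> > 0"
  shows "\<exists>A. finite A \<and> (\<forall>i\<in>I. osc_between_marks_le a b A \<eta> (\<lambda>s. G s i))"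
proof -
  define good where "good s r \<longleftrightarrow> r > 0 \<and>
      (s < b \<longrightarrow> (\<forall>u\<in>{s..<s + r}. \<forall>i\<in>I. \<bar>G u i - G s i\<bar> \<le> \<eta> / 2)) \<and>
      (a < s \<longrightarrow> (\<forall>u\<in>{s - r<..<s}. \<forall>w\<in>{s - r<..<s}. \<forall>i\<in>I. \<bar>G u i - G w i\<bar> \<le> \<eta>))" for s r
  have "\<forall>s\<in>{a..b}. \<exists>r. good s r"
    unfolding good_def using marks_local_radius[OF right left _ \<open>\<eta> > 0\<close>] by blast
  then obtain \<rho> where \<rho>: "\<forall>s\<in>{a..b}. good s (\<rho> s)"
    by (rule bchoice[elim_format]) blast
  have "{a..b} \<subseteq> (\<Union>s\<in>{a..b}. ball s (\<rho> s))"
    using \<rho> by (auto simp: good_def)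
  then obtain C where C: "C \<subseteq> {a..b}" "finite C" "{a..b} \<subseteq> (\<Union>c\<in>C. ball c (\<rho> c))"
    using compactE_image[of "{a..b}" "{a..b}" "\<lambda>s. ball s (\<rho> s)"] by auto
  define A where "A = C \<union> (\<lambda>c. c + \<rho> c) ` C"
  have "osc_between_marks_le a b A \<eta> (\<lambda>s. G s i)" if "i \<in> I" for i
    unfolding osc_between_marks_le_def
  proof (intro allI impI)
    fix s u assume su: "a \<le> s" "s \<le> u" "u < b" and no_mark: "A \<inter> {s<..u} = {}"
    have "s \<in> {a..b}"
      using su by simp
    then obtain c where c: "c \<in> C" "\<bar>s - c\<bar> < \<rho> c"
      using C(3) by (auto simp: dist_real_def)
    have good_c: "good c (\<rho> c)"
      using C(1) c(1) \<rho> by auto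
    show "\<bar>G s i - G u i\<bar> \<le> \<eta>"
    proof (cases "s < c")
      case True
      have "c \<in> A"
        using c(1) by (simp add: A_def)
      then have "u < c"
        using no_mark True by (meson disjoint_iff greaterThanAtMost_iff not_le)
      then show ?thesis
        using good_c True su c(2) \<open>i \<in> I\<close> unfolding good_def by auto
    next
      case False
      have "c + \<rho> c \<in> A" "s < c + \<rho> c"
        using c by (auto simp: A_def)
      then have "u < c + \<rho> c"
        using no_mark by (meson disjoint_iff greaterThanAtMost_iff not_le)
      then have "\<bar>G u i - G c i\<bar> \<le> \<eta> / 2" "\<bar>G s i - G c i\<bar> \<le> \<eta> / 2"
        using good_c False su c(2) \<open>i \<in> I\<close> unfolding good_def by auto
      then show ?thesis
        by linarith
    qed
  qed
  moreover have "finite A"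
    unfolding A_def using C(2) by blast
  ultimately show ?thesis
    by blast
qed

lemma osc_between_marks_step_approx:
  fixes f :: "real \<Rightarrow> real"
  assumes "finite A" "\<eta> \<ge> 0" "a \<le> b" "osc_between_marks_le a b A \<eta> f"
  shows "\<exists>g. g integrable_on {a..b} \<and> (\<forall>x\<in>{a..b}. \<bar>f x - g x\<bar> \<le> \<eta>)"
  using assms(3,4)
proof (induction "card (A \<inter> {a<..<b})" arbitrary: a b rule: less_induct)
  case less
  show ?case
  proof (cases "A \<inter> {a<..<b} = {}")
    case True
    define g where "g x = (if x = b then f b else f a)" for x
    have "g integrable_on {a..b}"
      by (rule integrable_spike_finite[of "{b}" _ _ "\<lambda>x. f a"]) (auto simp: g_def)
    moreover have "\<bar>f x - g x\<bar> \<le> \<eta>" if x: "x \<in> {a..b}" for x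
    proof (cases "x = b")
      case False
      then have "A \<inter> {a<..x} = {}"
        using True x by auto
      then show ?thesis
        using osc_between_marks_leD[OF less.prems(2), of a x] x False
        by (simp add: g_def abs_minus_commute)
    qed (use assms(2) in \<open>simp add: g_def\<close>)
    ultimately show ?thesis by blast
  next
    case False
    then obtain c where c: "c \<in> A" "a < c" "c < b" by auto
    have fin: "finite (A \<inter> {a<..<b})"
      using assms(1) by simp
    have "card (A \<inter> {a<..<c}) < card (A \<inter> {a<..<b})" "card (A \<inter> {c<..<b}) < card (A \<inter> {a<..<b})"
      using c by (auto intro!: psubset_card_mono[OF fin])
    moreover have "osc_between_marks_le a c A \<eta> f" "osc_between_marks_le c b A \<eta> f"
      using osc_between_marks_le_subinterval[OF less.prems(2)] c by auto
    ultimately obtain g1 g2 where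
      g1: "g1 integrable_on {a..c}" "\<forall>x\<in>{a..c}. \<bar>f x - g1 x\<bar> \<le> \<eta>" and
      g2: "g2 integrable_on {c..b}" "\<forall>x\<in>{c..b}. \<bar>f x - g2 x\<bar> \<le> \<eta>"
      using less.hyps[of a c] less.hyps[of c b] c by auto
    define g where "g x = (if x < c then g1 x else g2 x)" for x
    have "g integrable_on {a..c}"
      by (rule integrable_spike_finite[of "{c}" _ _ g1]) (use g1 in \<open>auto simp: g_def\<close>)
    moreover have "g integrable_on {c..b}"
      by (rule integrable_spike_finite[of "{}" _ _ g2]) (use g2 in \<open>auto simp: g_def\<close>)
    ultimately have "g integrable_on {a..b}"
      using c by (intro Henstock_Kurzweil_Integration.integrable_combine[of a c b]) auto
    moreover have "\<forall>x\<in>{a..b}. \<bar>f x - g x\<bar> \<le> \<eta>"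
      using g1(2) g2(2) by (auto simp: g_def)
    ultimately show ?thesis by blast
  qed
qed

lemma integrable_if_finite_marks:
  fixes f :: "real \<Rightarrow> real"
  assumes "a \<le> b" and marks: "\<And>\<eta>. \<eta> > 0 \<Longrightarrow> \<exists>A. finite A \<and> osc_between_marks_le a b A \<eta> f"
  shows "f integrable_on {a..b}"
proof -
  have "\<exists>g. (\<forall>x\<in>cbox a b. norm (f x - g x) \<le> \<eta>) \<and> g integrable_on cbox a b" if \<eta>: "\<eta> > 0" for \<eta>
  proof -
    obtain A where "finite A" "osc_between_marks_le a b A \<eta> f"
      using marks[OF \<eta>] by blast
    then obtain g where "g integrable_on {a..b}" "\<forall>x\<in>{a..b}. \<bar>f x - g x\<bar> \<le> \<eta>"
      using osc_between_marks_step_approx[OF _ less_imp_le[OF \<eta>] \<open>a \<le> b\<close>] by blast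
    then show ?thesis
      by auto
  qed
  then show ?thesis
    using integrable_uniform_limit[of a b f] by simp
qed

lemma osc_between_marks_bounded:
  assumes "finite A" "osc_between_marks_le a b A \<eta> f"
  shows "\<exists>M. \<forall>s\<in>{a..b}. \<bar>f s\<bar> \<le> M"
proof -
  define M where "M = (\<Sum>x\<in>insert a (insert b A). \<bar>f x\<bar>) + \<bar>\<eta>\<bar>"
  have M: "\<bar>f x\<bar> + \<bar>\<eta>\<bar> \<le> M" if "x \<in> insert a (insert b A)" for x
    unfolding M_def using assms(1) that by (auto intro: member_le_sum)
  have "\<bar>f s\<bar> \<le> M" if s: "s \<in> {a..b}" for s
  proof (cases "s = b")
    case True
    then show ?thesis
      using M[of b] by simp
  next
    case False
    define L where "L = {x \<in> insert a A. x \<le> s}"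
    have L: "finite L" "a \<in> L"
      using assms(1) s by (auto simp: L_def)
    define a0 where "a0 = Max L"
    have "L \<noteq> {}"
      using L by blast
    then have "a0 \<in> L" "a \<le> a0"
      using L Max_in[OF L(1)] Max_ge[OF L(1)] by (auto simp: a0_def)
    moreover have "A \<inter> {a0<..s} = {}"
    proof -
      have "x \<le> a0" if "x \<in> A" "x \<le> s" for x
        using Max_ge[OF L(1), of x] that by (simp add: a0_def L_def)
      then show ?thesis
        by (auto simp: not_less[symmetric])
    qed
    ultimately have "\<bar>f a0 - f s\<bar> \<le> \<eta>"
      using osc_between_marks_leD[OF assms(2), of a0 s] s False by (auto simp: L_def)
    moreover have "\<bar>f a0\<bar> + \<bar>\<eta>\<bar> \<le> M"
      using \<open>a0 \<in> L\<close> by (intro M) (auto simp: L_def)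
    ultimately show ?thesis
      by linarith
  qed
  then show ?thesis by blast
qed

lemma cadlag_finite_family_right:
  assumes "finite F" "\<And>\<psi>. \<psi> \<in> F \<Longrightarrow> cadlag_on T (\<lambda>t. G t \<psi>)" "s \<in> {0..<T}" "\<eta> > 0"
  shows "\<exists>c>s. \<forall>u\<in>{s..<c}. \<forall>\<psi>\<in>F. \<bar>G u \<psi> - G s \<psi>\<bar> \<le> \<eta>"
proof -
  have "\<forall>\<psi>\<in>F. \<forall>\<^sub>F u in at_right s. dist (G u \<psi>) (G s \<psi>) < \<eta>"
  proof
    fix \<psi> assume "\<psi> \<in> F"
    then have "((\<lambda>t. G t \<psi>) \<longlongrightarrow> G s \<psi>) (at_right s)"
      using assms(2,3) unfolding cadlag_on_def by blast
    then show "\<forall>\<^sub>F u in at_right s. dist (G u \<psi>) (G s \<psi>) < \<eta>"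
      using \<open>\<eta> > 0\<close> by (rule tendstoD)
  qed
  then have "\<forall>\<^sub>F u in at_right s. \<forall>\<psi>\<in>F. dist (G u \<psi>) (G s \<psi>) < \<eta>"
    by (rule eventually_ball_finite[OF assms(1)])
  then obtain c where "c > s" "\<And>u. s < u \<Longrightarrow> u < c \<Longrightarrow> \<forall>\<psi>\<in>F. dist (G u \<psi>) (G s \<psi>) < \<eta>"
    unfolding eventually_at_right_field by blast
  then show ?thesis
    using \<open>\<eta> > 0\<close> by (intro exI[of _ c]) (force simp: dist_real_def le_less)
qed

lemma cadlag_finite_family_left:
  assumes "finite F" "\<And>\<psi>. \<psi> \<in> F \<Longrightarrow> cadlag_on T (\<lambda>t. G t \<psi>)" "s \<in> {0<..T}" "\<eta> > 0"
  shows "\<exists>c<s. \<forall>u\<in>{c<..<s}. \<forall>w\<in>{c<..<s}. \<forall>\<psi>\<in>F. \<bar>G u \<psi> - G w \<psi>\<bar> \<le> \<eta>"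
proof -
  have "\<forall>\<psi>\<in>F. \<exists>l. \<forall>\<^sub>F u in at_left s. dist (G u \<psi>) l < \<eta> / 2"
  proof
    fix \<psi> assume "\<psi> \<in> F"
    then obtain l where "((\<lambda>t. G t \<psi>) \<longlongrightarrow> l) (at_left s)"
      using assms(2,3) unfolding cadlag_on_def by blast
    then have "\<forall>\<^sub>F u in at_left s. dist (G u \<psi>) l < \<eta> / 2"
      using \<open>\<eta> > 0\<close> by (intro tendstoD) auto
    then show "\<exists>l. \<forall>\<^sub>F u in at_left s. dist (G u \<psi>) l < \<eta> / 2" ..
  qed
  then obtain l where "\<forall>\<psi>\<in>F. \<forall>\<^sub>F u in at_left s. dist (G u \<psi>) (l \<psi>) < \<eta> / 2"
    by (rule bchoice[elim_format]) blast
  then have "\<forall>\<^sub>F u in at_left s. \<forall>\<psi>\<in>F. dist (G u \<psi>) (l \<psi>) < \<eta> / 2"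
    by (rule eventually_ball_finite[OF assms(1)])
  then obtain c where c: "c < s" "\<And>u. c < u \<Longrightarrow> u < s \<Longrightarrow> \<forall>\<psi>\<in>F. dist (G u \<psi>) (l \<psi>) < \<eta> / 2"
    unfolding eventually_at_left_field by blast
  have "\<bar>G u \<psi> - G w \<psi>\<bar> \<le> \<eta>" if "u \<in> {c<..<s}" "w \<in> {c<..<s}" "\<psi> \<in> F" for u w \<psi>
  proof -
    have "\<bar>G u \<psi> - l \<psi>\<bar> < \<eta> / 2" "\<bar>G w \<psi> - l \<psi>\<bar> < \<eta> / 2"
      using c(2) that by (auto simp: dist_real_def)
    then show ?thesis
      by linarith
  qed
  with c(1) show ?thesis
    by blast
qed

lemma cadlag_finite_marks:
  assumes "cadlag_on T f" "\<eta> > 0"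
  shows "\<exists>A. finite A \<and> osc_between_marks_le 0 T A \<eta> f"
  using finite_marks[where G = "\<lambda>t _. f t" and I = "{()}", OF _ _ \<open>\<eta> > 0\<close>]
    cadlag_finite_family_right[of "{()}" T "\<lambda>t _. f t"]
    cadlag_finite_family_left[of "{()}" T "\<lambda>t _. f t"] assms(1)
  by simp

lemma cadlag_bounded: "cadlag_on T f \<Longrightarrow> \<exists>M. \<forall>s\<in>{0..T}. \<bar>f s\<bar> \<le> M"
  using cadlag_finite_marks[of T f 1] osc_between_marks_bounded by auto

lemma finite_marks_identity:
  assumes "h > 0"
  shows "\<exists>A. finite A \<and> osc_between_marks_le a b A h (\<lambda>s. s)"
proof -
  have "\<exists>c>s. \<forall>u\<in>{s..<c}. \<bar>u - s\<bar> \<le> \<epsilon>" if "\<epsilon> > 0" for s \<epsilon> :: real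
    using that by (intro exI[of _ "s + \<epsilon>"]) auto
  moreover have "\<exists>c<s. \<forall>u\<in>{c<..<s}. \<forall>w\<in>{c<..<s}. \<bar>u - w\<bar> \<le> \<epsilon>" if "\<epsilon> > 0" for s \<epsilon> :: real
    using that by (intro exI[of _ "s - \<epsilon>"]) auto
  ultimately show ?thesis
    using finite_marks[where G = "\<lambda>s _. s" and I = "{()}" and a = a and b = b, OF _ _ assms]
    by simp
qed

section \<open>Bounded sets of Schwartz functions\<close>

lemma schwartz_bounded_subset: "schwartz_bounded \<Psi> \<Longrightarrow> \<Psi> \<subseteq> schwartz"
  unfolding schwartz_bounded_def by blast

lemma schwartz_bounded_uniform:
  assumes "schwartz_bounded \<Psi>"
  obtains M where "M \<ge> 0" "\<And>\<psi> j k x. \<psi> \<in> \<Psi> \<Longrightarrow> j \<le> m \<Longrightarrow> k \<le> m \<Longrightarrow> \<bar>x ^ k * Dn j \<psi> x\<bar> \<le> M"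
proof -
  have "\<forall>j k. \<exists>C. \<forall>\<psi>\<in>\<Psi>. \<forall>x. \<bar>x ^ k * Dn j \<psi> x\<bar> \<le> C"
    using assms unfolding schwartz_bounded_def by blast
  then obtain C where C: "\<And>j k \<psi> x. \<psi> \<in> \<Psi> \<Longrightarrow> \<bar>x ^ k * Dn j \<psi> x\<bar> \<le> C j k"
    by metis
  define M where "M = (\<Sum>j\<le>m. \<Sum>k\<le>m. \<bar>C j k\<bar>)"
  have "\<bar>x ^ k * Dn j \<psi> x\<bar> \<le> M" if "\<psi> \<in> \<Psi>" "j \<le> m" "k \<le> m" for \<psi> j k x
  proof -
    have "\<bar>C j k\<bar> \<le> (\<Sum>k\<le>m. \<bar>C j k\<bar>)"
      using that by (intro member_le_sum) auto
    also have "\<dots> \<le> M"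
      unfolding M_def using that
      by (intro member_le_sum[where f = "\<lambda>j. \<Sum>k\<le>m. \<bar>C j k\<bar>"] sum_nonneg) auto
    finally show ?thesis
      using C[OF that(1), of x k j] by linarith
  qed
  moreover have "M \<ge> 0"
    unfolding M_def by (intro sum_nonneg) auto
  ultimately show ?thesis
    using that by blast
qed

lemma schwartz_bounded_norm_bounded:
  assumes "schwartz_bounded \<Psi>"
  obtains Q where "\<And>\<psi>. \<psi> \<in> \<Psi> \<Longrightarrow> schwartz_norm n \<psi> \<le> Q"
proof -
  obtain M where M: "\<And>\<psi> j k x. \<psi> \<in> \<Psi> \<Longrightarrow> j \<le> n \<Longrightarrow> k \<le> n \<Longrightarrow> \<bar>x ^ k * Dn j \<psi> x\<bar> \<le> M"
    using schwartz_bounded_uniform[OF assms, of n] by metis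
  have "schwartz_norm n \<psi> \<le> (real n + 1)\<^sup>2 * M" if \<psi>: "\<psi> \<in> \<Psi>" for \<psi>
    by (rule schwartz_norm_le) (rule M[OF \<psi>])
  then show ?thesis
    by (rule that)
qed

lemma floor_divide_eq_imp_close:
  fixes a b q :: real
  assumes "q > 0" "\<lfloor>a / q\<rfloor> = \<lfloor>b / q\<rfloor>"
  shows "\<bar>a - b\<bar> \<le> q"
proof -
  have "\<bar>a / q - b / q\<bar> < 1"
    using assms(2) floor_correct[of "a / q"] floor_correct[of "b / q"] by linarith
  then have "\<bar>a - b\<bar> / q < 1"
    using assms(1) by (simp add: abs_div_pos diff_divide_distrib)
  then show ?thesis
    using assms(1) by (simp add: divide_less_eq)
qed

lemma floor_divide_bounded:
  fixes y q M :: real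
  assumes "q > 0" "\<bar>y\<bar> \<le> M"
  shows "\<lfloor>y / q\<rfloor> \<in> {- (\<lceil>M / q\<rceil> + 1) .. \<lceil>M / q\<rceil> + 1}"
proof -
  have y: "y / q \<le> M / q" "- (M / q) \<le> y / q"
    using divide_right_mono[of y M q] divide_right_mono[of "- M" y q] assms by auto
  have floor: "real_of_int \<lfloor>y / q\<rfloor> \<le> y / q" "y / q < real_of_int \<lfloor>y / q\<rfloor> + 1"
    using floor_correct[of "y / q"] by auto
  have ceiling: "M / q \<le> real_of_int \<lceil>M / q\<rceil>"
    using ceiling_correct[of "M / q"] by auto
  have "real_of_int \<lfloor>y / q\<rfloor> \<le> real_of_int (\<lceil>M / q\<rceil> + 1)"
    "real_of_int (- (\<lceil>M / q\<rceil> + 1)) \<le> real_of_int \<lfloor>y / q\<rfloor>"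
    using y floor ceiling by simp_all linarith+
  then show ?thesis
    unfolding atLeastAtMost_iff of_int_le_iff by blast
qed

lemma finite_net_from_code:
  "finite (code ` \<Psi>) \<Longrightarrow> \<exists>F. finite F \<and> F \<subseteq> \<Psi> \<and> (\<forall>\<psi>\<in>\<Psi>. \<exists>\<psi>0\<in>F. code \<psi>0 = code \<psi>)"
  by (intro exI[of _ "inv_into \<Psi> code ` code ` \<Psi>"]) (auto intro: inv_into_into f_inv_into_f)

lemma close_if_close_on_grid:
  fixes f g :: "real \<Rightarrow> real"
  assumes lip: "\<And>y z. \<bar>f y - f z\<bar> \<le> L * \<bar>y - z\<bar>" "\<And>y z. \<bar>g y - g z\<bar> \<le> L * \<bar>y - z\<bar>"
    and decay: "\<And>x. \<bar>x\<bar> * \<bar>f x\<bar> \<le> M" "\<And>x. \<bar>x\<bar> * \<bar>g x\<bar> \<le> M"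
    and grid: "\<And>l. l \<le> nat \<lceil>2 * R / h\<rceil> \<Longrightarrow> \<bar>f (- R + real l * h) - g (- R + real l * h)\<bar> \<le> q"
    and "R > 0" "h > 0"
  shows "\<bar>f x - g x\<bar> \<le> max (2 * M / R) (2 * L * h + q)"
proof (cases "\<bar>x\<bar> < R")
  case False
  have "R * \<bar>f x\<bar> \<le> M" "R * \<bar>g x\<bar> \<le> M"
    using False decay[of x] by (meson abs_ge_zero mult_right_mono not_less order_trans)+
  then have "\<bar>f x\<bar> + \<bar>g x\<bar> \<le> 2 * M / R"
    using \<open>R > 0\<close> by (simp add: field_simps)
  then show ?thesis
    by linarith
next
  case True
  define l where "l = nat \<lfloor>(x + R) / h\<rfloor>"
  define y where "y = - R + real l * h"
  have "real l = of_int \<lfloor>(x + R) / h\<rfloor>"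
    using True \<open>h > 0\<close> by (simp add: l_def)
  then have "real l \<le> (x + R) / h" "(x + R) / h < real l + 1"
    by linarith+
  then have "y \<le> x" "x < y + h"
    using \<open>h > 0\<close> by (simp_all add: y_def field_simps)
  have "(x + R) / h \<le> 2 * R / h"
    using True \<open>h > 0\<close> by (intro divide_right_mono) auto
  then have "\<lfloor>(x + R) / h\<rfloor> \<le> \<lceil>2 * R / h\<rceil>"
    by linarith
  then have "l \<le> nat \<lceil>2 * R / h\<rceil>"
    unfolding l_def by linarith
  then have "\<bar>f y - g y\<bar> \<le> q"
    unfolding y_def by (rule grid)
  moreover have "L \<ge> 0"
    using lip(1)[of 1 0] abs_ge_zero[of "f 1 - f 0"] by simp
  then have "\<bar>f x - f y\<bar> \<le> L * h" "\<bar>g x - g y\<bar> \<le> L * h"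
    using lip[of x y] \<open>y \<le> x\<close> \<open>x < y + h\<close>
    by (smt (verit, best) mult_left_mono)+
  ultimately show ?thesis
    by linarith
qed

lemma weighted_Dn_lipschitz:
  assumes "\<phi> \<in> schwartz"
    and "\<And>x. \<bar>x ^ (k - 1) * Dn j \<phi> x\<bar> \<le> M" "\<And>x. \<bar>x ^ k * Dn (Suc j) \<phi> x\<bar> \<le> M"
  shows "\<bar>y ^ k * Dn j \<phi> y - z ^ k * Dn j \<phi> z\<bar> \<le> (real k + 1) * M * \<bar>y - z\<bar>"
proof -
  have "norm (y ^ k * Dn j \<phi> y - z ^ k * Dn j \<phi> z) \<le> (real k + 1) * M * norm (y - z)"
  proof (rule field_differentiable_bound[where S = UNIV])
    fix x :: real
    show "((\<lambda>x. x ^ k * Dn j \<phi> x) has_field_derivative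
        real k * x ^ (k - 1) * Dn j \<phi> x + x ^ k * Dn (Suc j) \<phi> x) (at x within UNIV)"
      by (auto intro!: derivative_eq_intros schwartz_has_deriv[OF assms(1)])
    have "\<bar>real k * x ^ (k - 1) * Dn j \<phi> x\<bar> \<le> real k * M"
      using assms(2)[of x] by (simp add: abs_mult mult.assoc mult_left_mono)
    then show "norm (real k * x ^ (k - 1) * Dn j \<phi> x + x ^ k * Dn (Suc j) \<phi> x) \<le> (real k + 1) * M"
      using assms(3)[of x] by (simp add: algebra_simps)
  qed auto
  then show ?thesis
    by simp
qed

lemma grid_parameters:
  fixes M L \<epsilon> :: real
  assumes "M \<ge> 0" "L \<ge> 0" "\<epsilon> > 0"
  obtains R h q where "R > 0" "h > 0" "q > 0" "max (2 * M / R) (2 * L * h + q) \<le> \<epsilon>"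
proof
  define R where "R = 4 * M / \<epsilon> + 1"
  have "4 * M / \<epsilon> \<ge> 0"
    using assms by simp
  then show "R > 0"
    unfolding R_def by linarith
  show "\<epsilon> / (4 * (L + 1)) > 0" "\<epsilon> / 4 > 0"
    using assms by simp_all
  have "R * \<epsilon> = 4 * M + \<epsilon>"
    using assms(3) by (simp add: R_def distrib_right)
  then have "2 * M / R \<le> \<epsilon>"
    using assms \<open>R > 0\<close> by (simp add: pos_divide_le_eq mult.commute)
  moreover have "2 * L * (\<epsilon> / (4 * (L + 1))) + \<epsilon> / 4 \<le> \<epsilon>"
  proof -
    have "2 * L * (\<epsilon> / (4 * (L + 1))) = (\<epsilon> / 2) * (L / (L + 1))"
      using assms(2) by (simp add: field_simps)
    also have "\<dots> \<le> (\<epsilon> / 2) * 1"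
      using assms by (intro mult_left_mono) auto
    finally show ?thesis
      using assms(3) by linarith
  qed
  ultimately show "max (2 * M / R) (2 * L * (\<epsilon> / (4 * (L + 1))) + \<epsilon> / 4) \<le> \<epsilon>"
    by (rule max.boundedI)
qed

lemma schwartz_norm_diff_le_grid:
  fixes \<psi> \<psi>0 :: "real \<Rightarrow> real"
  assumes S: "\<psi> \<in> schwartz" "\<psi>0 \<in> schwartz"
    and M: "\<And>\<phi> j k x. \<phi> \<in> {\<psi>, \<psi>0} \<Longrightarrow> j \<le> Suc n \<Longrightarrow> k \<le> Suc n \<Longrightarrow> \<bar>x ^ k * Dn j \<phi> x\<bar> \<le> M"
    and grid: "\<And>j k l. j \<le> n \<Longrightarrow> k \<le> n \<Longrightarrow> l \<le> nat \<lceil>2 * R / h\<rceil> \<Longrightarrow>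
      \<bar>(- R + real l * h) ^ k * Dn j \<psi> (- R + real l * h)
        - (- R + real l * h) ^ k * Dn j \<psi>0 (- R + real l * h)\<bar> \<le> q"
    and "R > 0" "h > 0"
  shows "schwartz_norm n (\<lambda>x. \<psi> x - \<psi>0 x)
    \<le> (real n + 1)\<^sup>2 * max (2 * M / R) (2 * ((real n + 1) * M) * h + q)"
proof (rule schwartz_norm_le)
  fix j k x assume "j \<le> n" "k \<le> n"
  define w where "w \<phi> y = y ^ k * Dn j \<phi> y" for \<phi> and y :: real
  have "M \<ge> 0"
    using M[of \<psi> 0 0 0] by simp
  have lip: "\<bar>w \<phi> y - w \<phi> z\<bar> \<le> (real n + 1) * M * \<bar>y - z\<bar>" if "\<phi> \<in> {\<psi>, \<psi>0}" for \<phi> y z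
  proof -
    have "\<bar>w \<phi> y - w \<phi> z\<bar> \<le> (real k + 1) * M * \<bar>y - z\<bar>"
      unfolding w_def using that S \<open>j \<le> n\<close> \<open>k \<le> n\<close>
      by (intro weighted_Dn_lipschitz M[OF that]) auto
    also have "\<dots> \<le> (real n + 1) * M * \<bar>y - z\<bar>"
      using \<open>k \<le> n\<close> \<open>M \<ge> 0\<close> by (intro mult_right_mono) auto
    finally show ?thesis .
  qed
  have decay: "\<bar>y\<bar> * \<bar>w \<phi> y\<bar> \<le> M" if "\<phi> \<in> {\<psi>, \<psi>0}" for \<phi> y
    using M[OF that, of j "Suc k" y] \<open>j \<le> n\<close> \<open>k \<le> n\<close> by (simp add: w_def abs_mult mult.assoc)
  have "\<bar>w \<psi> x - w \<psi>0 x\<bar> \<le> max (2 * M / R) (2 * ((real n + 1) * M) * h + q)"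
    using grid[OF \<open>j \<le> n\<close> \<open>k \<le> n\<close>] \<open>R > 0\<close> \<open>h > 0\<close>
    by (intro close_if_close_on_grid[OF lip lip decay decay]) (auto simp: w_def)
  then show "\<bar>x ^ k * Dn j (\<lambda>x. \<psi> x - \<psi>0 x) x\<bar>
      \<le> max (2 * M / R) (2 * ((real n + 1) * M) * h + q)"
    by (simp add: Dn_diff[OF S] w_def right_diff_distrib)
qed

(* Weighted derivatives of functions in Psi are uniformly Lipschitz and decay like 1/|x|, so up to
   eta they are determined by their rounded values on a finite grid, of which there are finitely
   many. *)
lemma schwartz_bounded_finite_net:
  assumes \<Psi>: "schwartz_bounded \<Psi>" and "\<eta> > 0"
  shows "\<exists>F. finite F \<and> F \<subseteq> \<Psi> \<and> (\<forall>\<psi>\<in>\<Psi>. \<exists>\<psi>0\<in>F. schwartz_norm n (\<lambda>x. \<psi> x - \<psi>0 x) \<le> \<eta>)"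
proof -
  obtain M where "M \<ge> 0"
    and M: "\<And>\<psi> j k x. \<psi> \<in> \<Psi> \<Longrightarrow> j \<le> Suc n \<Longrightarrow> k \<le> Suc n \<Longrightarrow> \<bar>x ^ k * Dn j \<psi> x\<bar> \<le> M"
    using schwartz_bounded_uniform[OF \<Psi>, of "Suc n"] by metis
  obtain R h q where "R > 0" "h > 0" "q > 0"
    and bound: "max (2 * M / R) (2 * ((real n + 1) * M) * h + q) \<le> \<eta> / (real n + 1)\<^sup>2"
    using grid_parameters[of M "(real n + 1) * M" "\<eta> / (real n + 1)\<^sup>2"] \<open>M \<ge> 0\<close> \<open>\<eta> > 0\<close> by auto
  define I where "I = {..n} \<times> {..n} \<times> {..nat \<lceil>2 * R / h\<rceil>}"
  define code where "code \<psi> =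
    restrict (\<lambda>(j, k, l). \<lfloor>(- R + real l * h) ^ k * Dn j \<psi> (- R + real l * h) / q\<rfloor>) I" for \<psi>
  define N where "N = \<lceil>M / q\<rceil> + 1"
  have "code ` \<Psi> \<subseteq> (\<Pi>\<^sub>E t\<in>I. {-N..N})"
  proof
    fix c assume "c \<in> code ` \<Psi>"
    then obtain \<psi> where "\<psi> \<in> \<Psi>" "c = code \<psi>" ..
    have "\<lfloor>(- R + real l * h) ^ k * Dn j \<psi> (- R + real l * h) / q\<rfloor> \<in> {-N..N}"
      if "(j, k, l) \<in> I" for j k l
    proof -
      from that have "j \<le> Suc n" "k \<le> Suc n"
        by (auto simp: I_def)
      then show ?thesis
        unfolding N_def by (rule floor_divide_bounded[OF \<open>q > 0\<close> M[OF \<open>\<psi> \<in> \<Psi>\<close>]])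
    qed
    then show "c \<in> (\<Pi>\<^sub>E t\<in>I. {-N..N})"
      unfolding \<open>c = code \<psi>\<close> code_def restrict_PiE_iff by auto
  qed
  moreover have "finite (\<Pi>\<^sub>E t\<in>I. {-N..N})"
    by (rule finite_PiE) (simp_all add: I_def)
  ultimately have "finite (code ` \<Psi>)"
    by (rule finite_subset)
  from finite_net_from_code[OF this] obtain F
    where F: "finite F" "F \<subseteq> \<Psi>" "\<forall>\<psi>\<in>\<Psi>. \<exists>\<psi>0\<in>F. code \<psi>0 = code \<psi>"
    by blast
  have "\<exists>\<psi>0\<in>F. schwartz_norm n (\<lambda>x. \<psi> x - \<psi>0 x) \<le> \<eta>" if \<psi>: "\<psi> \<in> \<Psi>" for \<psi>
  proof -
    obtain \<psi>0 where "\<psi>0 \<in> F" and same_code: "code \<psi>0 = code \<psi>"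
      using F(3) \<psi> by blast
    then have "\<psi>0 \<in> \<Psi>"
      using F(2) by blast
    have "schwartz_norm n (\<lambda>x. \<psi> x - \<psi>0 x)
        \<le> (real n + 1)\<^sup>2 * max (2 * M / R) (2 * ((real n + 1) * M) * h + q)"
    proof (rule schwartz_norm_diff_le_grid)
      fix j k l assume "j \<le> n" "k \<le> n" "l \<le> nat \<lceil>2 * R / h\<rceil>"
      then have "(j, k, l) \<in> I"
        by (simp add: I_def)
      then have "\<lfloor>(- R + real l * h) ^ k * Dn j \<psi>0 (- R + real l * h) / q\<rfloor>
          = \<lfloor>(- R + real l * h) ^ k * Dn j \<psi> (- R + real l * h) / q\<rfloor>"
        using fun_cong[OF same_code, of "(j, k, l)"] by (simp add: code_def)
      then show "\<bar>(- R + real l * h) ^ k * Dn j \<psi> (- R + real l * h)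
          - (- R + real l * h) ^ k * Dn j \<psi>0 (- R + real l * h)\<bar> \<le> q"
        by (rule floor_divide_eq_imp_close[OF \<open>q > 0\<close> sym])
    qed (use \<psi> \<open>\<psi>0 \<in> \<Psi>\<close> schwartz_bounded_subset[OF \<Psi>] M \<open>R > 0\<close> \<open>h > 0\<close> in auto)
    also have "\<dots> \<le> \<eta>"
      using mult_left_mono[OF bound, of "(real n + 1)\<^sup>2"] by simp
    finally show ?thesis
      using \<open>\<psi>0 \<in> F\<close> by blast
  qed
  then show ?thesis
    using F(1,2) by (intro exI[of _ F]) simp
qed

lemma schwartz_bounded_singleton: "\<phi> \<in> schwartz \<Longrightarrow> schwartz_bounded {\<phi>}"
  unfolding schwartz_bounded_def using schwartz_decay by auto

section \<open>Paths in D([0,T], S')\<close>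

lemma Dpaths_tempered: "X \<in> Dpaths T \<Longrightarrow> s \<in> {0..T} \<Longrightarrow> tempered (X s)"
  unfolding Dpaths_def by blast

lemma Dpaths_cadlag: "X \<in> Dpaths T \<Longrightarrow> \<phi> \<in> schwartz \<Longrightarrow> cadlag_on T (\<lambda>t. X t \<phi>)"
  unfolding Dpaths_def by blast

lemma Dpaths_uniform_bound:
  assumes "X \<in> Dpaths T"
  obtains C n where "C \<ge> 0" "\<And>s \<phi>. s \<in> {0..T} \<Longrightarrow> \<phi> \<in> schwartz \<Longrightarrow> \<bar>X s \<phi>\<bar> \<le> C * schwartz_norm n \<phi>"
proof -
  have "\<exists>C n. C \<ge> 0 \<and> (\<forall>s\<in>{0..T}. \<forall>\<phi>\<in>schwartz. \<bar>X s \<phi>\<bar> \<le> C * schwartz_norm n \<phi>)"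
    using Dpaths_tempered[OF assms] cadlag_bounded[OF Dpaths_cadlag[OF assms]]
    by (intro tempered_uniform_boundedness) blast+
  with that show ?thesis
    by blast
qed

lemma Dpaths_bounded_on:
  assumes X: "X \<in> Dpaths T" and \<Psi>: "schwartz_bounded \<Psi>"
  obtains K where "K \<ge> 0" "\<And>s \<psi>. s \<in> {0..T} \<Longrightarrow> \<psi> \<in> \<Psi> \<Longrightarrow> \<bar>X s \<psi>\<bar> \<le> K"
proof -
  obtain C n where "C \<ge> 0"
    and C: "\<And>s \<psi>. s \<in> {0..T} \<Longrightarrow> \<psi> \<in> schwartz \<Longrightarrow> \<bar>X s \<psi>\<bar> \<le> C * schwartz_norm n \<psi>"
    using Dpaths_uniform_bound[OF X] by blast
  obtain Q where Q: "\<And>\<psi>. \<psi> \<in> \<Psi> \<Longrightarrow> schwartz_norm n \<psi> \<le> Q"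
    using schwartz_bounded_norm_bounded[OF \<Psi>] by blast
  have "\<bar>X s \<psi>\<bar> \<le> C * max Q 0" if "s \<in> {0..T}" "\<psi> \<in> \<Psi>" for s \<psi>
  proof -
    have "\<bar>X s \<psi>\<bar> \<le> C * schwartz_norm n \<psi>"
      using that schwartz_bounded_subset[OF \<Psi>] by (intro C) auto
    also have "\<dots> \<le> C * max Q 0"
      using Q[OF that(2)] \<open>C \<ge> 0\<close> by (intro mult_left_mono) auto
    finally show ?thesis .
  qed
  moreover have "C * max Q 0 \<ge> 0"
    using \<open>C \<ge> 0\<close> by simp
  ultimately show ?thesis
    using that by blast
qed

lemma Dpaths_finite_net:
  assumes X: "X \<in> Dpaths T" and \<Psi>: "schwartz_bounded \<Psi>" and "\<eta> > 0"
  obtains F where "finite F" "F \<subseteq> \<Psi>" "\<And>\<psi>. \<psi> \<in> \<Psi> \<Longrightarrow> \<exists>\<psi>0\<in>F. \<forall>s\<in>{0..T}. \<bar>X s \<psi> - X s \<psi>0\<bar> \<le> \<eta>"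
proof -
  obtain C n where "C \<ge> 0"
    and C: "\<And>s \<phi>. s \<in> {0..T} \<Longrightarrow> \<phi> \<in> schwartz \<Longrightarrow> \<bar>X s \<phi>\<bar> \<le> C * schwartz_norm n \<phi>"
    using Dpaths_uniform_bound[OF X] by blast
  obtain F where F: "finite F" "F \<subseteq> \<Psi>"
    and net: "\<forall>\<psi>\<in>\<Psi>. \<exists>\<psi>0\<in>F. schwartz_norm n (\<lambda>x. \<psi> x - \<psi>0 x) \<le> \<eta> / (C + 1)"
    using schwartz_bounded_finite_net[OF \<Psi>, of "\<eta> / (C + 1)" n] \<open>C \<ge> 0\<close> \<open>\<eta> > 0\<close> by auto
  have "\<exists>\<psi>0\<in>F. \<forall>s\<in>{0..T}. \<bar>X s \<psi> - X s \<psi>0\<bar> \<le> \<eta>" if \<psi>: "\<psi> \<in> \<Psi>" for \<psi>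
  proof -
    obtain \<psi>0 where "\<psi>0 \<in> F" and close: "schwartz_norm n (\<lambda>x. \<psi> x - \<psi>0 x) \<le> \<eta> / (C + 1)"
      using net \<psi> by blast
    have S: "\<psi> \<in> schwartz" "\<psi>0 \<in> schwartz"
      using \<psi> \<open>\<psi>0 \<in> F\<close> F(2) schwartz_bounded_subset[OF \<Psi>] by auto
    have "\<bar>X s \<psi> - X s \<psi>0\<bar> \<le> \<eta>" if s: "s \<in> {0..T}" for s
    proof -
      have "\<bar>X s \<psi> - X s \<psi>0\<bar> = \<bar>X s (\<lambda>x. \<psi> x - \<psi>0 x)\<bar>"
        using tempered_diff[OF Dpaths_tempered[OF X s] S] by simp
      also have "\<dots> \<le> C * schwartz_norm n (\<lambda>x. \<psi> x - \<psi>0 x)"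
        by (rule C[OF s schwartz_diff[OF S]])
      also have "\<dots> \<le> C * (\<eta> / (C + 1))"
        using close \<open>C \<ge> 0\<close> by (rule mult_left_mono)
      also have "\<dots> \<le> \<eta>"
        using \<open>C \<ge> 0\<close> \<open>\<eta> > 0\<close> by (simp add: field_simps)
      finally show ?thesis .
    qed
    with \<open>\<psi>0 \<in> F\<close> show ?thesis
      by blast
  qed
  with F that show ?thesis
    by blast
qed

lemma Dpaths_uniformly_right_continuous:
  assumes X: "X \<in> Dpaths T" and \<Psi>: "schwartz_bounded \<Psi>" and s: "s \<in> {0..<T}" and "\<eta> > 0"
  shows "\<exists>c>s. \<forall>u\<in>{s..<c}. \<forall>\<psi>\<in>\<Psi>. \<bar>X u \<psi> - X s \<psi>\<bar> \<le> \<eta>"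
proof -
  obtain F where F: "finite F" "F \<subseteq> \<Psi>"
    and net: "\<And>\<psi>. \<psi> \<in> \<Psi> \<Longrightarrow> \<exists>\<psi>0\<in>F. \<forall>t\<in>{0..T}. \<bar>X t \<psi> - X t \<psi>0\<bar> \<le> \<eta> / 3"
    using Dpaths_finite_net[OF X \<Psi>, of "\<eta> / 3"] \<open>\<eta> > 0\<close> by auto
  have "cadlag_on T (\<lambda>t. X t \<psi>0)" if "\<psi>0 \<in> F" for \<psi>0
    using that F(2) schwartz_bounded_subset[OF \<Psi>] Dpaths_cadlag[OF X] by blast
  then obtain c where "c > s" and c: "\<forall>u\<in>{s..<c}. \<forall>\<psi>0\<in>F. \<bar>X u \<psi>0 - X s \<psi>0\<bar> \<le> \<eta> / 3"
    using cadlag_finite_family_right[OF F(1) _ s, of "\<lambda>t \<psi>. X t \<psi>" "\<eta> / 3"] \<open>\<eta> > 0\<close> by auto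
  have "\<bar>X u \<psi> - X s \<psi>\<bar> \<le> \<eta>" if u: "u \<in> {s..<min c T}" and \<psi>: "\<psi> \<in> \<Psi>" for u \<psi>
  proof -
    obtain \<psi>0 where "\<psi>0 \<in> F" and \<psi>0: "\<forall>t\<in>{0..T}. \<bar>X t \<psi> - X t \<psi>0\<bar> \<le> \<eta> / 3"
      using net[OF \<psi>] by blast
    have "\<bar>X u \<psi>0 - X s \<psi>0\<bar> \<le> \<eta> / 3"
      using c u \<open>\<psi>0 \<in> F\<close> by auto
    moreover have "\<bar>X u \<psi> - X u \<psi>0\<bar> \<le> \<eta> / 3" "\<bar>X s \<psi> - X s \<psi>0\<bar> \<le> \<eta> / 3"
      using \<psi>0 u s by auto
    ultimately show ?thesis
      by linarith
  qed
  moreover have "min c T > s"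
    using \<open>c > s\<close> s by simp
  ultimately show ?thesis
    by (meson atLeastLessThan_iff less_le_trans min.cobounded1 order.strict_trans1)
qed

lemma Dpaths_uniformly_left_cauchy:
  assumes X: "X \<in> Dpaths T" and \<Psi>: "schwartz_bounded \<Psi>" and s: "s \<in> {0<..T}" and "\<eta> > 0"
  shows "\<exists>c<s. \<forall>u\<in>{c<..<s}. \<forall>w\<in>{c<..<s}. \<forall>\<psi>\<in>\<Psi>. \<bar>X u \<psi> - X w \<psi>\<bar> \<le> \<eta>"
proof -
  obtain F where F: "finite F" "F \<subseteq> \<Psi>"
    and net: "\<And>\<psi>. \<psi> \<in> \<Psi> \<Longrightarrow> \<exists>\<psi>0\<in>F. \<forall>t\<in>{0..T}. \<bar>X t \<psi> - X t \<psi>0\<bar> \<le> \<eta> / 3"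
    using Dpaths_finite_net[OF X \<Psi>, of "\<eta> / 3"] \<open>\<eta> > 0\<close> by auto
  have "cadlag_on T (\<lambda>t. X t \<psi>0)" if "\<psi>0 \<in> F" for \<psi>0
    using that F(2) schwartz_bounded_subset[OF \<Psi>] Dpaths_cadlag[OF X] by blast
  then obtain c where "c < s"
    and c: "\<forall>u\<in>{c<..<s}. \<forall>w\<in>{c<..<s}. \<forall>\<psi>0\<in>F. \<bar>X u \<psi>0 - X w \<psi>0\<bar> \<le> \<eta> / 3"
    using cadlag_finite_family_left[OF F(1) _ s, of "\<lambda>t \<psi>. X t \<psi>" "\<eta> / 3"] \<open>\<eta> > 0\<close> by auto
  have "\<bar>X u \<psi> - X w \<psi>\<bar> \<le> \<eta>"
    if uw: "u \<in> {max c 0<..<s}" "w \<in> {max c 0<..<s}" and \<psi>: "\<psi> \<in> \<Psi>" for u w \<psi>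
  proof -
    obtain \<psi>0 where "\<psi>0 \<in> F" and \<psi>0: "\<forall>t\<in>{0..T}. \<bar>X t \<psi> - X t \<psi>0\<bar> \<le> \<eta> / 3"
      using net[OF \<psi>] by blast
    have "\<bar>X u \<psi>0 - X w \<psi>0\<bar> \<le> \<eta> / 3"
      using c uw \<open>\<psi>0 \<in> F\<close> by auto
    moreover have "\<bar>X u \<psi> - X u \<psi>0\<bar> \<le> \<eta> / 3" "\<bar>X w \<psi> - X w \<psi>0\<bar> \<le> \<eta> / 3"
      using \<psi>0 uw s by auto
    ultimately show ?thesis
      by linarith
  qed
  moreover have "max c 0 < s"
    using \<open>c < s\<close> s by simp
  ultimately show ?thesis
    by blast
qed

lemma Dpaths_finite_marks:
  assumes "X \<in> Dpaths T" "schwartz_bounded \<Psi>" "\<eta> > 0"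
  shows "\<exists>A. finite A \<and> (\<forall>\<psi>\<in>\<Psi>. osc_between_marks_le 0 T A \<eta> (\<lambda>s. X s \<psi>))"
  using finite_marks[where G = X and I = \<Psi>, OF Dpaths_uniformly_right_continuous[OF assms(1,2)]
      Dpaths_uniformly_left_cauchy[OF assms(1,2)] assms(3)] .

section \<open>The map N\<close>

(* The test functions tau_(t-s) phi' paired with X_s in N(X)_t, for all t, s in [0,T] and phi in B. *)
definition transl_derivs :: "real \<Rightarrow> (real \<Rightarrow> real) set \<Rightarrow> (real \<Rightarrow> real) set" where
  "transl_derivs T B = {transl a (deriv \<phi>) | a \<phi>. a \<in> {0..T} \<and> \<phi> \<in> B}"

lemma transl_derivsI: "a \<in> {0..T} \<Longrightarrow> \<phi> \<in> B \<Longrightarrow> transl a (deriv \<phi>) \<in> transl_derivs T B"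
  unfolding transl_derivs_def by blast

lemma Dn_transl_deriv: "\<phi> \<in> schwartz \<Longrightarrow> Dn j (transl a (deriv \<phi>)) = transl a (Dn (Suc j) \<phi>)"
  using Dn_transl[OF schwartz_deriv, of \<phi> j a] by (simp add: Dn_deriv)

lemma schwartz_transl_deriv: "\<phi> \<in> schwartz \<Longrightarrow> transl a (deriv \<phi>) \<in> schwartz"
  by (intro schwartz_transl schwartz_deriv)

lemma schwartz_bounded_transl_derivs:
  assumes B: "schwartz_bounded B"
  shows "schwartz_bounded (transl_derivs T B)"
  unfolding schwartz_bounded_def
proof (intro conjI allI)
  show "transl_derivs T B \<subseteq> schwartz"
    using schwartz_bounded_subset[OF B] schwartz_transl_deriv by (auto simp: transl_derivs_def)
  fix j k
  obtain c1 where c1: "\<And>\<phi> x. \<phi> \<in> B \<Longrightarrow> \<bar>x ^ k * Dn (Suc j) \<phi> x\<bar> \<le> c1"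
    using B unfolding schwartz_bounded_def by meson
  obtain c0 where c0: "\<And>\<phi> x. \<phi> \<in> B \<Longrightarrow> \<bar>x ^ 0 * Dn (Suc j) \<phi> x\<bar> \<le> c0"
    using B unfolding schwartz_bounded_def by meson
  have "\<bar>x ^ k * Dn j \<psi> x\<bar> \<le> 2 ^ k * (c1 + T ^ k * c0)" if \<psi>_mem: "\<psi> \<in> transl_derivs T B" for \<psi> x
  proof -
    obtain a \<phi> where a: "a \<in> {0..T}" "\<phi> \<in> B" and \<psi>: "\<psi> = transl a (deriv \<phi>)"
      using \<psi>_mem unfolding transl_derivs_def by blast
    have "\<bar>x ^ k * Dn (Suc j) \<phi> (x - a)\<bar> \<le> 2 ^ k * (c1 + T ^ k * c0)"
      using c1[OF a(2)] c0[OF a(2)] a(1) by (intro transl_decay) auto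
    then show ?thesis
      unfolding \<psi> Dn_transl_deriv[OF subsetD[OF schwartz_bounded_subset[OF B] a(2)]]
      by (simp add: transl_def)
  qed
  then show "\<exists>C. \<forall>\<psi>\<in>transl_derivs T B. \<forall>x. \<bar>x ^ k * Dn j \<psi> x\<bar> \<le> C"
    by blast
qed

lemma transl_constant_le:
  fixes c T :: real
  assumes "k \<le> n" "c \<ge> 0" "T \<ge> 0"
  shows "2 ^ k * (c + T ^ k * c) \<le> 2 ^ n * (1 + (1 + T) ^ n) * c"
proof -
  have "T ^ k \<le> (1 + T) ^ k"
    using assms(3) by (intro power_mono) auto
  also have "\<dots> \<le> (1 + T) ^ n"
    using assms(1,3) by (intro power_increasing) auto
  finally have weight: "(1 + T ^ k) * c \<le> (1 + (1 + T) ^ n) * c"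
    using assms(2) by (intro mult_right_mono) auto
  have two: "(2::real) ^ k \<le> 2 ^ n"
    using assms(1) by (intro power_increasing) auto
  have "2 ^ k * ((1 + T ^ k) * c) \<le> 2 ^ n * ((1 + (1 + T) ^ n) * c)"
    by (rule mult_mono[OF two weight]) (use assms(2,3) in auto)
  then show ?thesis
    by (simp add: algebra_simps)
qed

(* From |x|^k <= 2^k (|x - a|^k + T^k) for |a| <= T. *)
definition transl_weight :: "real \<Rightarrow> nat \<Rightarrow> real" where
  "transl_weight T n = (real n + 1)\<^sup>2 * (2 ^ n * (1 + (1 + T) ^ n))"

lemma transl_weight_nonneg: "T \<ge> 0 \<Longrightarrow> transl_weight T n \<ge> 0"
  by (simp add: transl_weight_def)

lemma schwartz_norm_transl_deriv_le:
  assumes \<phi>: "\<phi> \<in> schwartz" and a: "a \<in> {0..T}"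
  shows "schwartz_norm n (transl a (deriv \<phi>)) \<le> transl_weight T n * schwartz_norm (Suc n) \<phi>"
  unfolding transl_weight_def mult.assoc
proof (rule schwartz_norm_le)
  fix j k x assume "j \<le> n" "k \<le> n"
  define q where "q = schwartz_norm (Suc n) \<phi>"
  have q: "schwartz_seminorm (Suc j) k \<phi> \<le> q" "schwartz_seminorm (Suc j) 0 \<phi> \<le> q"
    using \<open>j \<le> n\<close> \<open>k \<le> n\<close> unfolding q_def by (auto intro!: schwartz_seminorm_le_norm \<phi>)
  have "\<bar>y ^ k * Dn (Suc j) \<phi> y\<bar> \<le> q" "\<bar>Dn (Suc j) \<phi> y\<bar> \<le> q" for y
    using schwartz_seminorm_upper[OF \<phi>, of y k "Suc j"] abs_le_schwartz_seminorm[OF \<phi>, of "Suc j" y] q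
    by linarith+
  then have "\<bar>x ^ k * Dn (Suc j) \<phi> (x - a)\<bar> \<le> 2 ^ k * (q + T ^ k * q)"
    using a by (intro transl_decay) auto
  also have "\<dots> \<le> 2 ^ n * (1 + (1 + T) ^ n) * q"
    using \<open>k \<le> n\<close> schwartz_norm_nonneg[OF \<phi>] a by (intro transl_constant_le) (auto simp: q_def)
  finally show "\<bar>x ^ k * Dn j (transl a (deriv \<phi>)) x\<bar> \<le> 2 ^ n * ((1 + (1 + T) ^ n) * q)"
    unfolding Dn_transl_deriv[OF \<phi>] by (simp add: transl_def mult.assoc)
qed

lemma schwartz_norm_transl_deriv_diff_le:
  assumes \<phi>: "\<phi> \<in> schwartz" and "a \<in> {0..T}" "b \<in> {0..T}"
  shows "schwartz_norm n (\<lambda>x. transl a (deriv \<phi>) x - transl b (deriv \<phi>) x)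
    \<le> transl_weight T n * schwartz_norm (Suc (Suc n)) \<phi> * \<bar>a - b\<bar>"
  unfolding transl_weight_def mult.assoc
proof (rule schwartz_norm_le)
  fix j k x assume "j \<le> n" "k \<le> n"
  define q where "q = schwartz_norm (Suc (Suc n)) \<phi>"
  have q: "schwartz_seminorm (Suc (Suc j)) k \<phi> \<le> q" "schwartz_seminorm (Suc (Suc j)) 0 \<phi> \<le> q"
    using \<open>j \<le> n\<close> \<open>k \<le> n\<close> unfolding q_def by (auto intro!: schwartz_seminorm_le_norm \<phi>)
  have "\<bar>y ^ k * Dn (Suc (Suc j)) \<phi> y\<bar> \<le> q" "\<bar>Dn (Suc (Suc j)) \<phi> y\<bar> \<le> q" for y
    using schwartz_seminorm_upper[OF \<phi>, of y k "Suc (Suc j)"]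
      abs_le_schwartz_seminorm[OF \<phi>, of "Suc (Suc j)" y] q
    by linarith+
  then have "\<bar>x ^ k * (Dn (Suc j) \<phi> (x - a) - Dn (Suc j) \<phi> (x - b))\<bar> \<le> 2 ^ k * (q + T ^ k * q) * \<bar>a - b\<bar>"
    using assms(2,3) by (intro transl_diff_decay[OF schwartz_has_deriv[OF \<phi>]]) auto
  also have "\<dots> \<le> 2 ^ n * (1 + (1 + T) ^ n) * q * \<bar>a - b\<bar>"
    using \<open>k \<le> n\<close> schwartz_norm_nonneg[OF \<phi>] assms(2)
    by (intro mult_right_mono transl_constant_le) (auto simp: q_def)
  finally show "\<bar>x ^ k * Dn j (\<lambda>x. transl a (deriv \<phi>) x - transl b (deriv \<phi>) x) x\<bar>
      \<le> 2 ^ n * ((1 + (1 + T) ^ n) * (q * \<bar>a - b\<bar>))"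
    unfolding Dn_diff[OF schwartz_transl_deriv[OF \<phi>] schwartz_transl_deriv[OF \<phi>]] Dn_transl_deriv[OF \<phi>]
    by (simp add: transl_def mult.assoc)
qed

lemma Dpaths_transl_deriv_diff_bound:
  assumes X: "X \<in> Dpaths T" and \<phi>: "\<phi> \<in> schwartz" and "s \<in> {0..T}" "a \<in> {0..T}" "b \<in> {0..T}"
    and C: "C \<ge> 0" "\<And>s \<psi>. s \<in> {0..T} \<Longrightarrow> \<psi> \<in> schwartz \<Longrightarrow> \<bar>X s \<psi>\<bar> \<le> C * schwartz_norm n \<psi>"
  shows "\<bar>X s (transl a (deriv \<phi>)) - X s (transl b (deriv \<phi>))\<bar>
    \<le> C * transl_weight T n * schwartz_norm (Suc (Suc n)) \<phi> * \<bar>a - b\<bar>"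
proof -
  have S: "transl a (deriv \<phi>) \<in> schwartz" "transl b (deriv \<phi>) \<in> schwartz"
    using schwartz_transl_deriv[OF \<phi>] by auto
  have "\<bar>X s (transl a (deriv \<phi>)) - X s (transl b (deriv \<phi>))\<bar>
      = \<bar>X s (\<lambda>x. transl a (deriv \<phi>) x - transl b (deriv \<phi>) x)\<bar>"
    using tempered_diff[OF Dpaths_tempered[OF X \<open>s \<in> {0..T}\<close>] S] by simp
  also have "\<dots> \<le> C * schwartz_norm n (\<lambda>x. transl a (deriv \<phi>) x - transl b (deriv \<phi>) x)"
    by (rule C(2)[OF \<open>s \<in> {0..T}\<close> schwartz_diff[OF S]])
  also have "\<dots> \<le> C * (transl_weight T n * schwartz_norm (Suc (Suc n)) \<phi> * \<bar>a - b\<bar>)"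
    using assms(4,5) by (intro mult_left_mono C(1) schwartz_norm_transl_deriv_diff_le[OF \<phi>])
  finally show ?thesis
    by (simp add: mult.assoc)
qed

lemma Nmap_integrand_integrable:
  assumes X: "X \<in> Dpaths T" and \<phi>: "\<phi> \<in> schwartz" and t: "t \<in> {0..T}"
  shows "(\<lambda>s. X s (transl (t - s) (deriv \<phi>))) integrable_on {0..t}"
proof (rule integrable_if_finite_marks)
  show "0 \<le> t"
    using t by simp
  fix \<eta> :: real assume "\<eta> > 0"
  obtain C n where "C \<ge> 0"
    and C: "\<And>s \<psi>. s \<in> {0..T} \<Longrightarrow> \<psi> \<in> schwartz \<Longrightarrow> \<bar>X s \<psi>\<bar> \<le> C * schwartz_norm n \<psi>"
    using Dpaths_uniform_bound[OF X] by blast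
  define L where "L = C * (transl_weight T n * schwartz_norm (Suc (Suc n)) \<phi>)"
  have "L \<ge> 0"
    using \<open>C \<ge> 0\<close> t transl_weight_nonneg[of T n] schwartz_norm_nonneg[OF \<phi>] by (simp add: L_def)
  define h where "h = \<eta> / (2 * (L + 1))"
  have "h > 0"
    using \<open>\<eta> > 0\<close> \<open>L \<ge> 0\<close> by (simp add: h_def)
  have "L * h \<le> \<eta> / 2"
  proof -
    have "L * h = (\<eta> / 2) * (L / (L + 1))"
      using \<open>L \<ge> 0\<close> by (simp add: h_def field_simps)
    also have "\<dots> \<le> (\<eta> / 2) * 1"
      using \<open>L \<ge> 0\<close> \<open>\<eta> > 0\<close> by (intro mult_left_mono) auto
    finally show ?thesis by simp
  qed
  obtain A1 where "finite A1"
    and A1: "\<forall>\<psi>\<in>transl_derivs T {\<phi>}. osc_between_marks_le 0 T A1 (\<eta> / 2) (\<lambda>s. X s \<psi>)"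
    using Dpaths_finite_marks[OF X schwartz_bounded_transl_derivs[OF schwartz_bounded_singleton[OF \<phi>]],
        of "\<eta> / 2"] \<open>\<eta> > 0\<close> by auto
  obtain A2 where "finite A2" and A2: "osc_between_marks_le 0 t A2 h (\<lambda>s. s)"
    using finite_marks_identity[OF \<open>h > 0\<close>] by blast
  have "osc_between_marks_le 0 t (A1 \<union> A2) \<eta> (\<lambda>s. X s (transl (t - s) (deriv \<phi>)))"
    unfolding osc_between_marks_le_def
  proof (intro allI impI)
    fix s u assume su: "0 \<le> s" "s \<le> u" "u < t" and no_mark: "(A1 \<union> A2) \<inter> {s<..u} = {}"
    have "transl (t - s) (deriv \<phi>) \<in> transl_derivs T {\<phi>}"
      using su t by (intro transl_derivsI) auto
    then have "osc_between_marks_le 0 T A1 (\<eta> / 2) (\<lambda>r. X r (transl (t - s) (deriv \<phi>)))"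
      using A1 by blast
    moreover have "A1 \<inter> {s<..u} = {}" "u < T"
      using no_mark su t by auto
    ultimately have "\<bar>X s (transl (t - s) (deriv \<phi>)) - X u (transl (t - s) (deriv \<phi>))\<bar> \<le> \<eta> / 2"
      using su by (intro osc_between_marks_leD[of 0 T A1 _ "\<lambda>r. X r (transl (t - s) (deriv \<phi>))" s u]) simp_all
    moreover have "\<bar>X u (transl (t - s) (deriv \<phi>)) - X u (transl (t - u) (deriv \<phi>))\<bar> \<le> \<eta> / 2"
    proof -
      have u: "u \<in> {0..T}"
        using su t by auto
      have "\<bar>s - u\<bar> \<le> h"
        using osc_between_marks_leD[OF A2, of s u] su no_mark by auto
      have "\<bar>X u (transl (t - s) (deriv \<phi>)) - X u (transl (t - u) (deriv \<phi>))\<bar>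
          \<le> C * transl_weight T n * schwartz_norm (Suc (Suc n)) \<phi> * \<bar>(t - s) - (t - u)\<bar>"
        using su t by (intro Dpaths_transl_deriv_diff_bound[OF X \<phi> _ _ _ \<open>C \<ge> 0\<close> C]) auto
      also have "\<dots> = L * \<bar>s - u\<bar>"
        by (simp add: L_def abs_minus_commute mult.assoc)
      also have "\<dots> \<le> L * h"
        using \<open>\<bar>s - u\<bar> \<le> h\<close> \<open>L \<ge> 0\<close> by (rule mult_left_mono)
      finally show ?thesis
        using \<open>L * h \<le> \<eta> / 2\<close> by linarith
    qed
    ultimately show "\<bar>X s (transl (t - s) (deriv \<phi>)) - X u (transl (t - u) (deriv \<phi>))\<bar> \<le> \<eta>"
      by linarith
  qed
  with \<open>finite A1\<close> \<open>finite A2\<close>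
  show "\<exists>A. finite A \<and> osc_between_marks_le 0 t A \<eta> (\<lambda>s. X s (transl (t - s) (deriv \<phi>)))"
    by blast
qed

lemma abs_integral_le:
  fixes f :: "real \<Rightarrow> real"
  assumes "f integrable_on {a..b}" "a \<le> b" "\<And>s. s \<in> {a..b} \<Longrightarrow> \<bar>f s\<bar> \<le> K"
  shows "\<bar>integral {a..b} f\<bar> \<le> (b - a) * K"
proof -
  have "norm (integral {a..b} f) \<le> integral {a..b} (\<lambda>s. K)"
    by (rule integral_norm_bound_integral) (use assms in auto)
  then show ?thesis
    using assms(2) by simp
qed

lemma Nmap_lincomb:
  assumes X: "X \<in> Dpaths T" and t: "t \<in> {0..T}" and S: "\<phi> \<in> schwartz" "\<psi> \<in> schwartz"
  shows "Nmap X t (\<lambda>x. a * \<phi> x + b * \<psi> x) = a * Nmap X t \<phi> + b * Nmap X t \<psi>"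
proof -
  define F where "F s = X s (transl (t - s) (deriv \<phi>))" for s
  define G where "G s = X s (transl (t - s) (deriv \<psi>))" for s
  have "deriv (\<lambda>x. a * \<phi> x + b * \<psi> x) = (\<lambda>x. a * deriv \<phi> x + b * deriv \<psi> x)"
    using Dn_lincomb[OF S, of 1 a b] by simp
  then have transl_lincomb: "transl c (deriv (\<lambda>x. a * \<phi> x + b * \<psi> x))
      = (\<lambda>x. a * transl c (deriv \<phi>) x + b * transl c (deriv \<psi>) x)" for c
    by (simp add: transl_def)
  have integrand: "X s (transl (t - s) (deriv (\<lambda>x. a * \<phi> x + b * \<psi> x))) = a * F s + b * G s"
    if "s \<in> {0..t}" for s
  proof -
    have "tempered (X s)"
      using that t by (intro Dpaths_tempered[OF X]) auto
    then show ?thesis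
      unfolding transl_lincomb F_def G_def
      by (rule tempered_lincomb[OF _ schwartz_transl_deriv[OF S(1)] schwartz_transl_deriv[OF S(2)]])
  qed
  have int: "F integrable_on {0..t}" "G integrable_on {0..t}"
    unfolding F_def G_def using Nmap_integrand_integrable[OF X _ t] S by auto
  have int': "(\<lambda>s. a * F s) integrable_on {0..t}" "(\<lambda>s. b * G s) integrable_on {0..t}"
    using integrable_on_cmult_left[OF int(1), of a] integrable_on_cmult_left[OF int(2), of b] by simp_all
  have "integral {0..t} (\<lambda>s. X s (transl (t - s) (deriv (\<lambda>x. a * \<phi> x + b * \<psi> x))))
      = integral {0..t} (\<lambda>s. a * F s + b * G s)"
    by (rule integral_cong) (rule integrand)
  also have "\<dots> = a * integral {0..t} F + b * integral {0..t} G"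
    by (simp only: integral_add[OF int'] integral_mult[OF int(1)] integral_mult[OF int(2)])
  finally show ?thesis
    unfolding Nmap_def F_def G_def by (simp only: mult_minus_right minus_add_distrib)
qed

lemma Dpaths_transl_deriv_bound:
  assumes \<phi>: "\<phi> \<in> schwartz" and "s \<in> {0..T}" "a \<in> {0..T}"
    and C: "C \<ge> 0" "\<And>s \<psi>. s \<in> {0..T} \<Longrightarrow> \<psi> \<in> schwartz \<Longrightarrow> \<bar>X s \<psi>\<bar> \<le> C * schwartz_norm n \<psi>"
  shows "\<bar>X s (transl a (deriv \<phi>))\<bar> \<le> C * transl_weight T n * schwartz_norm (Suc n) \<phi>"
proof -
  have "\<bar>X s (transl a (deriv \<phi>))\<bar> \<le> C * schwartz_norm n (transl a (deriv \<phi>))"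
    using assms(2) by (intro C(2) schwartz_transl_deriv[OF \<phi>])
  also have "\<dots> \<le> C * (transl_weight T n * schwartz_norm (Suc n) \<phi>)"
    using assms(3) by (intro mult_left_mono C(1) schwartz_norm_transl_deriv_le[OF \<phi>])
  finally show ?thesis
    by (simp add: mult.assoc)
qed

lemma Nmap_bound:
  assumes X: "X \<in> Dpaths T" and t: "t \<in> {0..T}" and \<phi>: "\<phi> \<in> schwartz"
    and C: "C \<ge> 0" "\<And>s \<psi>. s \<in> {0..T} \<Longrightarrow> \<psi> \<in> schwartz \<Longrightarrow> \<bar>X s \<psi>\<bar> \<le> C * schwartz_norm n \<psi>"
  shows "\<bar>Nmap X t \<phi>\<bar> \<le> T * C * transl_weight T n * schwartz_norm (Suc n) \<phi>"
proof -
  have "\<bar>integral {0..t} (\<lambda>s. X s (transl (t - s) (deriv \<phi>)))\<bar>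
      \<le> (t - 0) * (C * transl_weight T n * schwartz_norm (Suc n) \<phi>)"
    using t by (intro abs_integral_le Nmap_integrand_integrable[OF X \<phi> t]
        Dpaths_transl_deriv_bound[OF \<phi> _ _ C]) auto
  also have "\<dots> \<le> T * (C * transl_weight T n * schwartz_norm (Suc n) \<phi>)"
    using t C(1) transl_weight_nonneg[of T n] schwartz_norm_nonneg[OF \<phi>] by (intro mult_right_mono) auto
  finally show ?thesis
    unfolding Nmap_def by (simp add: mult.assoc)
qed

lemma Nmap_tempered:
  assumes X: "X \<in> Dpaths T" and t: "t \<in> {0..T}"
  shows "tempered (Nmap X t)"
proof -
  obtain C n where C: "C \<ge> 0" "\<And>s \<psi>. s \<in> {0..T} \<Longrightarrow> \<psi> \<in> schwartz \<Longrightarrow> \<bar>X s \<psi>\<bar> \<le> C * schwartz_norm n \<psi>"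
    using Dpaths_uniform_bound[OF X] by blast
  show ?thesis
    unfolding tempered_def
  proof (intro conjI allI impI)
    show "Nmap X t (\<lambda>x. a * \<phi> x + b * \<psi> x) = a * Nmap X t \<phi> + b * Nmap X t \<psi>"
      if "\<phi> \<in> schwartz" "\<psi> \<in> schwartz" for a b \<phi> \<psi>
      using Nmap_lincomb[OF X t that] .
    have "\<forall>\<phi>\<in>schwartz. \<bar>Nmap X t \<phi>\<bar> \<le> (T * C * transl_weight T n) * schwartz_norm (Suc n) \<phi>"
      using Nmap_bound[OF X t _ C] by simp
    then show "\<exists>C n. \<forall>\<phi>\<in>schwartz. \<bar>Nmap X t \<phi>\<bar> \<le> C * (\<Sum>j\<le>n. \<Sum>k\<le>n. schwartz_seminorm j k \<phi>)"
      unfolding schwartz_norm_def by blast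
  qed
qed

lemma Nmap_increment_le:
  assumes X: "X \<in> Dpaths T" and \<phi>: "\<phi> \<in> schwartz"
    and C: "C \<ge> 0" "\<And>s \<psi>. s \<in> {0..T} \<Longrightarrow> \<psi> \<in> schwartz \<Longrightarrow> \<bar>X s \<psi>\<bar> \<le> C * schwartz_norm n \<psi>"
    and t: "t \<in> {0..T}" "t' \<in> {0..T}" "t \<le> t'"
  shows "\<bar>Nmap X t' \<phi> - Nmap X t \<phi>\<bar>
    \<le> C * transl_weight T n * (schwartz_norm (Suc n) \<phi> + T * schwartz_norm (Suc (Suc n)) \<phi>) * (t' - t)"
proof -
  define W where "W = C * transl_weight T n"
  have "W \<ge> 0"
    using C(1) t transl_weight_nonneg[of T n] by (simp add: W_def)
  define G' where "G' s = X s (transl (t' - s) (deriv \<phi>))" for s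
  define G where "G s = X s (transl (t - s) (deriv \<phi>))" for s
  have int': "G' integrable_on {0..t'}" and int: "G integrable_on {0..t}"
    unfolding G'_def G_def using Nmap_integrand_integrable[OF X \<phi>] t by auto
  have int'_head: "G' integrable_on {0..t}" and int'_tail: "G' integrable_on {t..t'}"
    using t by (auto intro: integrable_subinterval_real[OF int'])
  have "integral {0..t} G' + integral {t..t'} G' = integral {0..t'} G'"
    using t by (intro Henstock_Kurzweil_Integration.integral_combine int') auto
  then have split: "Nmap X t' \<phi> - Nmap X t \<phi> = - integral {0..t} (\<lambda>s. G' s - G s) - integral {t..t'} G'"
    unfolding Nmap_def G'_def[symmetric] G_def[symmetric] integral_diff[OF int'_head int] by linarith
  have "\<bar>integral {t..t'} G'\<bar> \<le> (t' - t) * (W * schwartz_norm (Suc n) \<phi>)"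
    using t unfolding G'_def W_def
    by (intro abs_integral_le int'_tail[unfolded G'_def] Dpaths_transl_deriv_bound[OF \<phi> _ _ C]) auto
  moreover have "\<bar>integral {0..t} (\<lambda>s. G' s - G s)\<bar>
      \<le> (t - 0) * (W * schwartz_norm (Suc (Suc n)) \<phi> * (t' - t))"
  proof (rule abs_integral_le[OF integrable_diff[OF int'_head int]])
    fix s assume "s \<in> {0..t}"
    then have "\<bar>G' s - G s\<bar> \<le> C * transl_weight T n * schwartz_norm (Suc (Suc n)) \<phi> * \<bar>(t' - s) - (t - s)\<bar>"
      unfolding G'_def G_def using t by (intro Dpaths_transl_deriv_diff_bound[OF X \<phi> _ _ _ C]) auto
    then show "\<bar>G' s - G s\<bar> \<le> W * schwartz_norm (Suc (Suc n)) \<phi> * (t' - t)"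
      using t by (simp add: W_def)
  qed (use t in simp)
  moreover have "t * (W * schwartz_norm (Suc (Suc n)) \<phi> * (t' - t))
      \<le> T * (W * schwartz_norm (Suc (Suc n)) \<phi> * (t' - t))"
    using t \<open>W \<ge> 0\<close> schwartz_norm_nonneg[OF \<phi>] by (intro mult_right_mono) auto
  ultimately show ?thesis
    unfolding split W_def[symmetric] by (simp add: algebra_simps)
qed

lemma Nmap_continuous:
  assumes X: "X \<in> Dpaths T" and \<phi>: "\<phi> \<in> schwartz"
  shows "continuous_on {0..T} (\<lambda>t. Nmap X t \<phi>)"
proof -
  obtain C n where C: "C \<ge> 0" "\<And>s \<psi>. s \<in> {0..T} \<Longrightarrow> \<psi> \<in> schwartz \<Longrightarrow> \<bar>X s \<psi>\<bar> \<le> C * schwartz_norm n \<psi>"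
    using Dpaths_uniform_bound[OF X] by blast
  define L where "L = max 0
    (C * transl_weight T n * (schwartz_norm (Suc n) \<phi> + T * schwartz_norm (Suc (Suc n)) \<phi>))"
  have increment: "\<bar>Nmap X t' \<phi> - Nmap X t \<phi>\<bar> \<le> L * (t' - t)"
    if "t \<in> {0..T}" "t' \<in> {0..T}" "t \<le> t'" for t t'
    using Nmap_increment_le[OF X \<phi> C that] that unfolding L_def
    by (smt (verit) max.cobounded2 mult_right_mono)
  have "L-lipschitz_on {0..T} (\<lambda>t. Nmap X t \<phi>)"
  proof (rule lipschitz_onI)
    fix t t' assume "t \<in> {0..T}" "t' \<in> {0..T}"
    then show "dist (Nmap X t \<phi>) (Nmap X t' \<phi>) \<le> L * dist t t'"
      using increment[of t t'] increment[of t' t]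
      by (cases "t \<le> t'") (auto simp: dist_real_def abs_minus_commute)
  qed (simp add: L_def)
  then show ?thesis
    by (rule lipschitz_on_continuous_on)
qed

lemma Nmap_Cpaths: "X \<in> Dpaths T \<Longrightarrow> Nmap X \<in> Cpaths T"
  unfolding Cpaths_def using Nmap_tempered Nmap_continuous by blast

section \<open>Skorokhod continuity\<close>

lemma time_change_fixes_end:
  assumes r: "r \<in> time_changes T" and "T \<ge> 0"
  shows "r T = T" and "\<And>u. u \<in> {0..T} \<Longrightarrow> r u = T \<Longrightarrow> u = T"
proof -
  have mono: "strict_mono_on {0..T} r" and onto: "r ` {0..T} = {0..T}"
    using r unfolding time_changes_def by auto
  obtain w where w: "w \<in> {0..T}" "r w = T"
    using onto \<open>T \<ge> 0\<close> by (metis atLeastAtMost_iff imageE order_refl)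
  have "r T \<in> {0..T}"
    using onto \<open>T \<ge> 0\<close> by auto
  moreover have "\<not> r w < r T"
    using w calculation by auto
  ultimately show "r T = T"
    using strict_mono_onD[OF mono w(1), of T] w \<open>T \<ge> 0\<close> by force
  fix u assume u: "u \<in> {0..T}" "r u = T"
  show "u = T"
  proof (rule ccontr)
    assume "u \<noteq> T"
    then have "r u < r T"
      using u \<open>T \<ge> 0\<close> by (intro strict_mono_onD[OF mono]) auto
    with u \<open>r T = T\<close> show False
      by simp
  qed
qed

lemma indicator_integral_le:
  fixes a d t :: real
  assumes "d \<ge> 0"
  shows "(indicator {a - d..a + d} :: real \<Rightarrow> real) integrable_on {0..t}"
    and "integral {0..t} (indicator {a - d..a + d} :: real \<Rightarrow> real) \<le> 2 * d"
proof -
  have eq: "{a - d..a + d} \<inter> {0..t} = {max (a - d) 0..min (a + d) t}"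
    by auto
  have ind: "indicator {a - d..a + d} = (\<lambda>s. if s \<in> {a - d..a + d} then 1 else (0::real))"
    by (auto simp: indicator_def)
  show "(indicator {a - d..a + d} :: real \<Rightarrow> real) integrable_on {0..t}"
    unfolding ind Henstock_Kurzweil_Integration.integrable_restrict_Int eq
    by (rule integrable_const_ivl)
  have "integral {0..t} (indicator {a - d..a + d} :: real \<Rightarrow> real) = integral {max (a - d) 0..min (a + d) t} (\<lambda>s. 1::real)"
    unfolding ind Henstock_Kurzweil_Integration.integral_restrict_Int eq by simp
  also have "\<dots> \<le> 2 * d"
    using assms by (auto simp: content_real_if)
  finally show "integral {0..t} (indicator {a - d..a + d} :: real \<Rightarrow> real) \<le> 2 * d" .
qed

lemma abs_integral_diff_le_marks:
  fixes f g :: "real \<Rightarrow> real" and A :: "real set" and t c K \<delta> :: real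
  assumes "f integrable_on {0..t}" "g integrable_on {0..t}" "t \<ge> 0" "finite A" "\<delta> \<ge> 0" "K \<ge> 0"
    and "\<And>s. s \<in> {0..t} \<Longrightarrow> \<bar>f s - g s\<bar> \<le> c + K * (\<Sum>a\<in>A. indicator {a - \<delta>..a + \<delta>} s)"
  shows "\<bar>integral {0..t} f - integral {0..t} g\<bar> \<le> t * c + K * (card A * (2 * \<delta>))"
proof -
  have ind: "(indicator {a - \<delta>..a + \<delta>} :: real \<Rightarrow> real) integrable_on {0..t}" for a
    using indicator_integral_le(1)[OF \<open>\<delta> \<ge> 0\<close>] .
  have count: "(\<lambda>s. \<Sum>a\<in>A. indicator {a - \<delta>..a + \<delta>} s :: real) integrable_on {0..t}"
    by (intro integrable_sum[OF \<open>finite A\<close>] ind)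
  then have bound: "(\<lambda>s. c + K * (\<Sum>a\<in>A. indicator {a - \<delta>..a + \<delta>} s :: real)) integrable_on {0..t}"
    using integrable_on_cmult_left[OF count, of K] by (intro integrable_add integrable_const_ivl) simp_all
  have "\<bar>integral {0..t} f - integral {0..t} g\<bar> = norm (integral {0..t} (\<lambda>s. f s - g s))"
    using integral_diff[OF assms(1,2)] by simp
  also have "\<dots> \<le> integral {0..t} (\<lambda>s. c + K * (\<Sum>a\<in>A. indicator {a - \<delta>..a + \<delta>} s))"
    using assms(7) by (intro integral_norm_bound_integral integrable_diff assms(1,2) bound) auto
  also have "\<dots> = t * c + K * (\<Sum>a\<in>A. integral {0..t} (indicator {a - \<delta>..a + \<delta>}))"
    using integral_add[OF integrable_const_ivl integrable_on_cmult_left[OF count, of K]]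
      integral_mult[OF count, of K] integral_sum[OF \<open>finite A\<close> ind] \<open>t \<ge> 0\<close>
    by simp
  also have "\<dots> \<le> t * c + K * (\<Sum>a\<in>A. 2 * \<delta>)"
    using \<open>K \<ge> 0\<close> indicator_integral_le(2)[OF \<open>\<delta> \<ge> 0\<close>]
    by (intro add_left_mono mult_left_mono sum_mono) auto
  finally show ?thesis
    by simp
qed

(* s = r u with |s - u| <= delta: either no mark separates s and u, so X hardly moves between
   them, or s lies within delta of a mark. *)
lemma skorokhod_close_pointwise:
  fixes X Y :: "real \<Rightarrow> (real \<Rightarrow> real) \<Rightarrow> real" and A :: "real set"
  assumes r: "r \<in> time_changes T" and "T \<ge> 0"
    and close: "\<And>t. t \<in> {0..T} \<Longrightarrow> \<bar>r t - t\<bar> \<le> \<delta> \<and> \<bar>X t \<psi> - Y (r t) \<psi>\<bar> \<le> \<delta>"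
    and marks: "osc_between_marks_le 0 T A \<eta> (\<lambda>s. X s \<psi>)" "finite A" "\<eta> \<ge> 0"
    and K: "\<And>s u. s \<in> {0..T} \<Longrightarrow> u \<in> {0..T} \<Longrightarrow> \<bar>X s \<psi> - X u \<psi>\<bar> \<le> K"
    and s: "s \<in> {0..T}"
  shows "\<bar>X s \<psi> - Y s \<psi>\<bar> \<le> \<eta> + \<delta> + K * (\<Sum>a\<in>A. indicator {a - \<delta>..a + \<delta>} s)"
proof -
  have "s \<in> r ` {0..T}"
    using r s unfolding time_changes_def by simp
  then obtain u where u: "u \<in> {0..T}" "r u = s"
    by blast
  have "\<bar>s - u\<bar> \<le> \<delta>" "\<bar>X u \<psi> - Y s \<psi>\<bar> \<le> \<delta>"
    using close[OF u(1)] u(2) by auto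
  have "K \<ge> 0"
    using K[OF s s] by simp
  define count where "count = (\<Sum>a\<in>A. indicator {a - \<delta>..a + \<delta>} s :: real)"
  have "count \<ge> 0"
    unfolding count_def by (intro sum_nonneg) simp
  define p where "p = min s u"
  define q where "q = max s u"
  have pq: "p \<le> s" "s \<le> q" "q - p = \<bar>s - u\<bar>" "\<bar>X p \<psi> - X q \<psi>\<bar> = \<bar>X s \<psi> - X u \<psi>\<bar>"
    unfolding p_def q_def by (cases "s \<le> u"; simp add: abs_minus_commute)+
  have "\<bar>X s \<psi> - X u \<psi>\<bar> \<le> \<eta> + K * count"
  proof (cases "s = u")
    case True
    then show ?thesis
      using \<open>\<eta> \<ge> 0\<close> \<open>K \<ge> 0\<close> \<open>count \<ge> 0\<close> by simp
  next
    case False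
    have "u \<noteq> T"
      using False u(2) time_change_fixes_end(1)[OF r \<open>T \<ge> 0\<close>] by auto
    moreover have "s \<noteq> T"
    proof
      assume "s = T"
      then have "u = T"
        using time_change_fixes_end(2)[OF r \<open>T \<ge> 0\<close> u(1)] u(2) by simp
      with \<open>s = T\<close> False show False
        by simp
    qed
    ultimately have "q < T" "0 \<le> p"
      using s u unfolding p_def q_def by auto
    show ?thesis
    proof (cases "A \<inter> {p<..q} = {}")
      case True
      then have "\<bar>X p \<psi> - X q \<psi>\<bar> \<le> \<eta>"
        using \<open>q < T\<close> \<open>0 \<le> p\<close> pq by (intro osc_between_marks_leD[OF marks(1)]) auto
      then show ?thesis
        using pq(4) \<open>K \<ge> 0\<close> \<open>count \<ge> 0\<close> by (simp add: add_increasing2)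
    next
      case False
      then obtain a where a: "a \<in> A" "p < a" "a \<le> q"
        by auto
      have "q - p \<le> \<delta>"
        using pq(3) \<open>\<bar>s - u\<bar> \<le> \<delta>\<close> by simp
      then have "\<bar>s - a\<bar> \<le> \<delta>"
        using a pq(1,2) unfolding abs_le_iff by linarith
      then have "indicator {a - \<delta>..a + \<delta>} s = (1::real)"
        by (simp add: indicator_def abs_le_iff)
      then have "1 \<le> count"
        unfolding count_def using member_le_sum[of a A "\<lambda>a. indicator {a - \<delta>..a + \<delta>} s :: real"] a(1) marks(2)
        by simp
      then have "K \<le> K * count"
        using \<open>K \<ge> 0\<close> by (metis mult_left_mono mult.right_neutral)
      then show ?thesis
        using K[OF s u(1)] \<open>\<eta> \<ge> 0\<close> by linarith
    qed
  qed
  with \<open>\<bar>X u \<psi> - Y s \<psi>\<bar> \<le> \<delta>\<close> show ?thesis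
    unfolding count_def by linarith
qed

lemma Nmap_diff_le_marks:
  fixes A :: "real set" and T \<eta> \<delta> K :: real
  assumes X: "X \<in> Dpaths T" and Y: "Y \<in> Dpaths T" and "T \<ge> 0" and r: "r \<in> time_changes T"
    and close: "\<And>t. t \<in> {0..T} \<Longrightarrow> \<bar>r t - t\<bar> \<le> \<delta> \<and> (\<forall>\<psi>\<in>transl_derivs T B. \<bar>X t \<psi> - Y (r t) \<psi>\<bar> \<le> \<delta>)"
    and marks: "\<forall>\<psi>\<in>transl_derivs T B. osc_between_marks_le 0 T A \<eta> (\<lambda>s. X s \<psi>)"
      "finite A" "\<eta> \<ge> 0" "\<delta> \<ge> 0"
    and K: "K \<ge> 0" "\<And>s u \<psi>. s \<in> {0..T} \<Longrightarrow> u \<in> {0..T} \<Longrightarrow> \<psi> \<in> transl_derivs T B \<Longrightarrow>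
      \<bar>X s \<psi> - X u \<psi>\<bar> \<le> K"
    and "\<phi> \<in> B" "B \<subseteq> schwartz" and t: "t \<in> {0..T}"
  shows "\<bar>Nmap X t \<phi> - Nmap Y t \<phi>\<bar> \<le> T * (\<eta> + \<delta>) + K * (card A * (2 * \<delta>))"
proof -
  have \<phi>: "\<phi> \<in> schwartz"
    using \<open>\<phi> \<in> B\<close> \<open>B \<subseteq> schwartz\<close> by blast
  have "\<bar>integral {0..t} (\<lambda>s. X s (transl (t - s) (deriv \<phi>)))
      - integral {0..t} (\<lambda>s. Y s (transl (t - s) (deriv \<phi>)))\<bar>
    \<le> t * (\<eta> + \<delta>) + K * (card A * (2 * \<delta>))"
  proof (rule abs_integral_diff_le_marks[OF Nmap_integrand_integrable[OF X \<phi> t]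
        Nmap_integrand_integrable[OF Y \<phi> t] _ \<open>finite A\<close> \<open>\<delta> \<ge> 0\<close> \<open>K \<ge> 0\<close>])
    fix s assume s: "s \<in> {0..t}"
    have \<psi>: "transl (t - s) (deriv \<phi>) \<in> transl_derivs T B"
      using s t \<open>\<phi> \<in> B\<close> by (intro transl_derivsI) auto
    show "\<bar>X s (transl (t - s) (deriv \<phi>)) - Y s (transl (t - s) (deriv \<phi>))\<bar>
        \<le> \<eta> + \<delta> + K * (\<Sum>a\<in>A. indicator {a - \<delta>..a + \<delta>} s)"
      using s t \<psi> marks(1) close \<open>\<eta> \<ge> 0\<close>
      by (intro skorokhod_close_pointwise[OF r \<open>T \<ge> 0\<close>] \<open>finite A\<close> K(2)) auto
  qed (use t in auto)
  also have "\<dots> \<le> T * (\<eta> + \<delta>) + K * (card A * (2 * \<delta>))"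
    using t \<open>\<eta> \<ge> 0\<close> \<open>\<delta> \<ge> 0\<close> by (intro add_right_mono mult_right_mono) auto
  finally show ?thesis
    unfolding Nmap_def by (simp add: abs_minus_commute)
qed

lemma Nmap_skorokhod_continuous:
  assumes X: "X \<in> Dpaths T" and "T \<ge> 0" and B': "schwartz_bounded B'" and "\<epsilon> > 0"
  shows "\<exists>B \<delta>. schwartz_bounded B \<and> \<delta> > 0 \<and>
    (\<forall>Y\<in>Dpaths T. skorokhod_close T B \<delta> X Y \<longrightarrow> uniform_close T B' \<epsilon> (Nmap X) (Nmap Y))"
proof -
  have \<Psi>: "schwartz_bounded (transl_derivs T B')"
    by (rule schwartz_bounded_transl_derivs[OF B'])
  obtain K0 where "K0 \<ge> 0"
    and bounded: "\<And>s \<psi>. s \<in> {0..T} \<Longrightarrow> \<psi> \<in> transl_derivs T B' \<Longrightarrow> \<bar>X s \<psi>\<bar> \<le> K0"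
    using Dpaths_bounded_on[OF X \<Psi>] by blast
  define K where "K = 2 * K0"
  have "K \<ge> 0"
    using \<open>K0 \<ge> 0\<close> by (simp add: K_def)
  have K: "\<bar>X s \<psi> - X u \<psi>\<bar> \<le> K" if "s \<in> {0..T}" "u \<in> {0..T}" "\<psi> \<in> transl_derivs T B'" for s u \<psi>
    using bounded[of s \<psi>] bounded[of u \<psi>] that unfolding K_def by linarith
  define \<eta> where "\<eta> = \<epsilon> / (3 * (T + 1))"
  have "\<eta> > 0"
    using \<open>\<epsilon> > 0\<close> \<open>T \<ge> 0\<close> by (simp add: \<eta>_def)
  have "T * \<eta> \<le> \<epsilon> / 3"
  proof -
    have "T * \<eta> = (\<epsilon> / 3) * (T / (T + 1))"
      by (simp add: \<eta>_def)
    also have "\<dots> \<le> (\<epsilon> / 3) * 1"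
      using \<open>T \<ge> 0\<close> \<open>\<epsilon> > 0\<close> by (intro mult_left_mono) auto
    finally show ?thesis by simp
  qed
  obtain A where "finite A" and A: "\<forall>\<psi>\<in>transl_derivs T B'. osc_between_marks_le 0 T A \<eta> (\<lambda>s. X s \<psi>)"
    using Dpaths_finite_marks[OF X \<Psi> \<open>\<eta> > 0\<close>] by blast
  define m where "m = K * real (card A)"
  have "m \<ge> 0"
    using \<open>K \<ge> 0\<close> by (simp add: m_def)
  define \<delta> where "\<delta> = min \<eta> (\<epsilon> / (3 * (2 * m + 1)))"
  have "\<delta> > 0" "\<delta> \<le> \<eta>"
    using \<open>\<eta> > 0\<close> \<open>\<epsilon> > 0\<close> \<open>m \<ge> 0\<close> by (simp_all add: \<delta>_def)
  have "K * (card A * (2 * \<delta>)) \<le> \<epsilon> / 3"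
  proof -
    have "K * (card A * (2 * \<delta>)) = 2 * m * \<delta>"
      by (simp add: m_def)
    also have "\<dots> \<le> 2 * m * (\<epsilon> / (3 * (2 * m + 1)))"
      using \<open>m \<ge> 0\<close> by (intro mult_left_mono) (auto simp: \<delta>_def)
    also have "\<dots> = (\<epsilon> / 3) * (2 * m / (2 * m + 1))"
      using \<open>m \<ge> 0\<close> by (simp add: field_simps)
    also have "\<dots> \<le> (\<epsilon> / 3) * 1"
      using \<open>m \<ge> 0\<close> \<open>\<epsilon> > 0\<close> by (intro mult_left_mono) auto
    finally show ?thesis by simp
  qed
  have "uniform_close T B' \<epsilon> (Nmap X) (Nmap Y)"
    if Y: "Y \<in> Dpaths T" and "skorokhod_close T (transl_derivs T B') \<delta> X Y" for Y
    unfolding uniform_close_def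
  proof (intro ballI)
    obtain r where r: "r \<in> time_changes T" and close: "\<And>t. t \<in> {0..T} \<Longrightarrow>
        \<bar>r t - t\<bar> \<le> \<delta> \<and> (\<forall>\<psi>\<in>transl_derivs T B'. \<bar>X t \<psi> - Y (r t) \<psi>\<bar> \<le> \<delta>)"
      using \<open>skorokhod_close T (transl_derivs T B') \<delta> X Y\<close> unfolding skorokhod_close_def by blast
    fix t \<phi> assume "t \<in> {0..T}" "\<phi> \<in> B'"
    have "\<bar>Nmap X t \<phi> - Nmap Y t \<phi>\<bar> \<le> T * (\<eta> + \<delta>) + K * (card A * (2 * \<delta>))"
      using \<open>\<eta> > 0\<close> \<open>\<delta> > 0\<close>
      by (intro Nmap_diff_le_marks[OF X Y \<open>T \<ge> 0\<close> r close A \<open>finite A\<close> _ _ \<open>K \<ge> 0\<close> K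
            \<open>\<phi> \<in> B'\<close> schwartz_bounded_subset[OF B'] \<open>t \<in> {0..T}\<close>]) auto
    also have "\<dots> \<le> T * (2 * \<eta>) + K * (card A * (2 * \<delta>))"
      using \<open>T \<ge> 0\<close> \<open>\<delta> \<le> \<eta>\<close> by (intro add_right_mono mult_left_mono) auto
    also have "\<dots> \<le> \<epsilon>"
      using \<open>T * \<eta> \<le> \<epsilon> / 3\<close> \<open>K * (card A * (2 * \<delta>)) \<le> \<epsilon> / 3\<close> by linarith
    finally show "\<bar>Nmap X t \<phi> - Nmap Y t \<phi>\<bar> \<le> \<epsilon>" .
  qed
  with \<Psi> \<open>\<delta> > 0\<close> show ?thesis
    by blast
qed

theorem proposition4:
  fixes T :: real
  assumes "T > 0"
  shows "continuous_D_to_C T Nmap"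
  unfolding continuous_D_to_C_def
  using Nmap_Cpaths Nmap_skorokhod_continuous[of _ T] assms by auto

end
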